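(* Let $k\in l_2(X)$ with $\check k\in L^\infty(G)$, and let $R(\check k)$ denote the essential range of $\check k$. Then $$R(\check k)\subseteq\sigma(W_k)\subseteq\overline{\operatorname{conv}}\,R(\check k),$$ where $\sigma(W_k)$ is the spectrum of $W_k$ on $l_2(X_+)$ and $\overline{\operatorname{conv}}$ denotes the closed convex hull in $\mathbb C$.
   Context: $X$ is a discrete linearly ordered abelian group with positive cone $X_+$; $G$ is its compact dual group with normalized Haar measure. $\check k(x)=\sum_{\xi\in X}k(\xi)\xi(x)$. $W_kg=1_{X_+}(k\ast g)$ on $l_2(X_+)$. *)

theory Defs
  imports "HOL-Analysis.Analysis" "HOL-Probability.Probability"
begin

text \<open>The dual group G of the discrete abelian group X: all characters X \<rightarrow> T.
  The pairing xi(x) of xi in X and x in G is written x xi.\<close>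
definition dual_group :: "('x::ab_group_add \<Rightarrow> complex) set" where
  "dual_group = {\<omega>. (\<forall>a b. \<omega> (a + b) = \<omega> a * \<omega> b) \<and> (\<forall>a. cmod (\<omega> a) = 1)}"

text \<open>Normalized Haar measure on G (on the sigma-algebra generated by the evaluation
  maps, i.e. the Baire sets of the compact group G): translation-invariant probability.\<close>
definition haar_dual :: "('x::ab_group_add \<Rightarrow> complex) measure \<Rightarrow> bool" where
  "haar_dual \<mu> \<longleftrightarrow> prob_space \<mu> \<and> space \<mu> = dual_group \<and>
     sets \<mu> = sigma_sets dual_group {{\<omega> \<in> dual_group. \<omega> \<xi> \<in> B} | \<xi> B. B \<in> sets borel} \<and>
     (\<forall>\<gamma>\<in>dual_group. (\<lambda>\<omega> \<xi>. \<gamma> \<xi> * \<omega> \<xi>) \<in> \<mu> \<rightarrow>\<^sub>M \<mu> \<and>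
        distr \<mu> \<mu> (\<lambda>\<omega> \<xi>. \<gamma> \<xi> * \<omega> \<xi>) = \<mu>)"

text \<open>h represents check k: h is the L2(G)-limit of the finite partial sums of
  sum_xi k(xi) xi(x).\<close>
definition is_check :: "('x::ab_group_add \<Rightarrow> complex) measure \<Rightarrow> ('x \<Rightarrow> complex)
    \<Rightarrow> (('x \<Rightarrow> complex) \<Rightarrow> complex) \<Rightarrow> bool" where
  "is_check \<mu> k h \<longleftrightarrow> h \<in> borel_measurable \<mu> \<and>
     ((\<lambda>F. \<integral>\<^sup>+ x. ennreal ((cmod (h x - (\<Sum>\<xi>\<in>F. k \<xi> * x \<xi>)))\<^sup>2) \<partial>\<mu>) \<longlongrightarrow> 0)
       (finite_subsets_at_top UNIV)"

definition ess_range :: "'a measure \<Rightarrow> ('a \<Rightarrow> complex) \<Rightarrow> complex set" where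
  "ess_range \<mu> f = {c. \<forall>e>0. emeasure \<mu> {x \<in> space \<mu>. cmod (f x - c) < e} > 0}"

text \<open>l2(X_+), realised as functions on X vanishing off X_+ = {xi. 0 <= xi}.\<close>
definition l2_plus :: "('x::linordered_ab_group_add \<Rightarrow> complex) set" where
  "l2_plus = {g. (\<forall>\<xi>. \<not> 0 \<le> \<xi> \<longrightarrow> g \<xi> = 0) \<and> (\<lambda>\<xi>. (cmod (g \<xi>))\<^sup>2) summable_on UNIV}"

definition l2_norm :: "('x \<Rightarrow> complex) \<Rightarrow> real" where
  "l2_norm g = sqrt (\<Sum>\<^sub>\<infinity>\<xi>. (cmod (g \<xi>))\<^sup>2)"

definition conv :: "('x::ab_group_add \<Rightarrow> complex) \<Rightarrow> ('x \<Rightarrow> complex) \<Rightarrow> 'x \<Rightarrow> complex" where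
  "conv k g \<xi> = (\<Sum>\<^sub>\<infinity>\<eta>. k (\<xi> - \<eta>) * g \<eta>)"

definition W :: "('x::linordered_ab_group_add \<Rightarrow> complex) \<Rightarrow> ('x \<Rightarrow> complex) \<Rightarrow> 'x \<Rightarrow> complex" where
  "W k g = (\<lambda>\<xi>. if 0 \<le> \<xi> then conv k g \<xi> else 0)"

definition spectrum_l2_plus :: "(('x::linordered_ab_group_add \<Rightarrow> complex) \<Rightarrow> ('x \<Rightarrow> complex)) \<Rightarrow> complex set" where
  "spectrum_l2_plus T = {z. \<not> (\<exists>S.
      (\<forall>g\<in>l2_plus. S g \<in> l2_plus) \<and>
      (\<forall>f\<in>l2_plus. \<forall>g\<in>l2_plus. \<forall>a b. S (\<lambda>\<xi>. a * f \<xi> + b * g \<xi>) = (\<lambda>\<xi>. a * S f \<xi> + b * S g \<xi>)) \<and>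
      (\<exists>C. \<forall>g\<in>l2_plus. l2_norm (S g) \<le> C * l2_norm g) \<and>
      (\<forall>g\<in>l2_plus. S (\<lambda>\<xi>. T g \<xi> - z * g \<xi>) = g) \<and>
      (\<forall>g\<in>l2_plus. (\<lambda>\<xi>. T (S g) \<xi> - z * S g \<xi>) = g))}"

end

theory Submission
  imports Defs
begin

text \<open>
  \<open>W\<^sub>k\<close> is the Toeplitz operator \<open>T\<^sub>h\<close> whose symbol \<open>h\<close> has Fourier coefficients \<open>k\<close>:
  in the orthonormal basis of characters it is multiplication by \<open>h\<close> followed by projection
  onto \<open>l\<^sub>2(X\<^sub>+)\<close>.

  If \<open>z\<close> lies outside the closed convex hull of the essential range, a line separating \<open>z\<close>
  from it gives \<open>s \<noteq> 0\<close> and \<open>r < 1\<close> with \<open>|1 - s (h - z)| \<le> r\<close> almost everywhere. Then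
  \<open>I - s (T\<^sub>h - z) = T\<^bsub>1 - s (h - z)\<^esub>\<close> has norm at most \<open>r\<close>, and a Neumann series inverts
  \<open>T\<^sub>h - z\<close>.

  Conversely, a bounded inverse of \<open>T\<^sub>h - z\<close> gives \<open>\<parallel>p\<parallel> \<le> C \<parallel>(h - z) p\<parallel>\<close> for trigonometric
  polynomials \<open>p\<close>: first for those with frequencies in \<open>X\<^sub>+\<close>, then for all of them after
  multiplication by a character. By density the bound extends to the \<open>L\<^sub>2\<close>-closure of the
  trigonometric polynomials among bounded functions, an algebra containing \<open>h\<close> and its
  conjugate. If \<open>z\<close> is in the essential range, the peak functions
  \<open>(1 - |h - z|\<^sup>2 / M\<^sup>2)\<^sup>N\<close> violate this bound.

  Orthonormality of the characters comes from translation invariance of Haar measure, once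
  characters are known to separate the points of \<open>X\<close>. This holds because a linearly ordered
  group is torsion-free, so every nonzero element is sent to \<open>1\<close> by some additive map into
  \<open>\<real>\<close> (Zorn's lemma).
\<close>

section \<open>Characters separate the points of a linearly ordered group\<close>

fun nat_mult :: "nat \<Rightarrow> 'a::ab_group_add \<Rightarrow> 'a" where
  "nat_mult 0 a = 0"
| "nat_mult (Suc n) a = a + nat_mult n a"

lemma nat_mult_add: "nat_mult (m + n) a = nat_mult m a + nat_mult n a"
  by (induction m) (auto simp: algebra_simps)

lemma nat_mult_add_right: "nat_mult n (a + b) = nat_mult n a + nat_mult n b"
  by (induction n) (auto simp: algebra_simps)

lemma nat_mult_uminus_right: "nat_mult n (- a) = - nat_mult n a"
  by (induction n) (auto simp: algebra_simps)

lemma nat_mult_diff_right: "nat_mult n (a - b) = nat_mult n a - nat_mult n b"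
  using nat_mult_add_right[of n a "- b"] by (simp add: nat_mult_uminus_right)

lemma nat_mult_mult: "nat_mult (m * n) a = nat_mult m (nat_mult n a)"
  by (induction m) (auto simp: nat_mult_add nat_mult_add_right)

lemma nat_mult_pos:
  fixes a :: "'a::linordered_ab_group_add"
  shows "0 < a \<Longrightarrow> 0 < n \<Longrightarrow> 0 < nat_mult n a"
proof (induction n)
  case (Suc n)
  then show ?case by (cases n) (auto simp: add_pos_pos)
qed simp

definition int_mult :: "int \<Rightarrow> 'a::ab_group_add \<Rightarrow> 'a" where
  "int_mult i a = (if 0 \<le> i then nat_mult (nat i) a else - nat_mult (nat (- i)) a)"

lemma int_mult_diff_of_nat: "int_mult (int n - int m) a = nat_mult n a - nat_mult m a"
proof (cases "m \<le> n")
  case True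
  then have diff: "int n - int m = int (n - m)"
    by simp
  have "n = (n - m) + m"
    using True by simp
  then have "nat_mult n a = nat_mult (n - m) a + nat_mult m a"
    by (metis nat_mult_add)
  then show ?thesis
    unfolding diff int_mult_def by simp
next
  case False
  then have diff: "int n - int m = - int (m - n)"
    by simp
  have "m = (m - n) + n"
    using False by simp
  then have "nat_mult m a = nat_mult (m - n) a + nat_mult n a"
    by (metis nat_mult_add)
  then show ?thesis
    unfolding diff int_mult_def using False by (simp add: nat_diff_distrib)
qed

lemma int_mult_add: "int_mult (i + j) a = int_mult i a + int_mult j a"
proof -
  obtain n1 m1 n2 m2 where "i = int n1 - int m1" "j = int n2 - int m2"
    by (metis int_diff_cases)
  moreover have "int n1 - int m1 + (int n2 - int m2) = int (n1 + n2) - int (m1 + m2)"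
    by simp
  ultimately show ?thesis
    by (simp only: int_mult_diff_of_nat nat_mult_add) (simp add: algebra_simps)
qed

lemma int_mult_0 [simp]: "int_mult 0 a = 0"
  and int_mult_1 [simp]: "int_mult 1 a = a"
  by (simp_all add: int_mult_def)

lemma int_mult_uminus: "int_mult (- i) a = - int_mult i a"
  using int_mult_add[of i "- i" a] by (simp add: eq_neg_iff_add_eq_0 add.commute)

lemma int_mult_mult: "int_mult (i * j) a = int_mult i (int_mult j a)"
proof -
  obtain n1 m1 n2 m2 where i: "i = int n1 - int m1" and j: "j = int n2 - int m2"
    by (metis int_diff_cases)
  have "i * j = int (n1 * n2 + m1 * m2) - int (n1 * m2 + m1 * n2)"
    unfolding i j by (simp add: algebra_simps)
  then have "int_mult (i * j) a = nat_mult (n1 * n2 + m1 * m2) a - nat_mult (n1 * m2 + m1 * n2) a"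
    by (simp only: int_mult_diff_of_nat)
  moreover have "int_mult i (int_mult j a)
      = nat_mult n1 (nat_mult n2 a - nat_mult m2 a) - nat_mult m1 (nat_mult n2 a - nat_mult m2 a)"
    unfolding i j by (simp only: int_mult_diff_of_nat)
  ultimately show ?thesis
    by (simp add: nat_mult_diff_right nat_mult_add nat_mult_mult[symmetric] algebra_simps)
      (metis add_right_cancel)
qed

lemma int_mult_commute: "int_mult i (int_mult j a) = int_mult j (int_mult i a)"
  by (metis int_mult_mult mult.commute)

lemma int_mult_eq_0D:
  fixes a :: "'a::linordered_ab_group_add"
  assumes "int_mult i a = 0" "i \<noteq> 0"
  shows "a = 0"
proof (rule ccontr)
  assume "a \<noteq> 0"
  then have "nat_mult n a \<noteq> 0" if "0 < n" for n
    using nat_mult_pos[OF _ that, of a] nat_mult_pos[OF _ that, of "- a"]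
    by (cases a "0::'a" rule: linorder_cases) (auto simp: nat_mult_uminus_right)
  then show False
    using assms by (auto simp: int_mult_def split: if_splits)
qed

definition additive_graph :: "('a::ab_group_add \<times> real) set \<Rightarrow> bool" where
  "additive_graph R \<longleftrightarrow> single_valued R \<and> (0, 0) \<in> R \<and>
     (\<forall>x u y v. (x, u) \<in> R \<longrightarrow> (y, v) \<in> R \<longrightarrow> (x + y, u + v) \<in> R) \<and>
     (\<forall>x u. (x, u) \<in> R \<longrightarrow> (- x, - u) \<in> R)"

lemma additive_graphD:
  assumes "additive_graph R"
  shows additive_graph_unique: "(x, u) \<in> R \<Longrightarrow> (x, v) \<in> R \<Longrightarrow> u = v"
    and additive_graph_zero: "(0, 0) \<in> R"
    and additive_graph_add: "(x, u) \<in> R \<Longrightarrow> (y, v) \<in> R \<Longrightarrow> (x + y, u + v) \<in> R"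
    and additive_graph_uminus: "(x, u) \<in> R \<Longrightarrow> (- x, - u) \<in> R"
  using assms unfolding additive_graph_def single_valued_def by blast+

lemma additive_graph_int_mult:
  assumes R: "additive_graph R" and xu: "(x, u) \<in> R"
  shows "(int_mult i x, of_int i * u) \<in> R"
proof -
  have nat: "(nat_mult n x, of_nat n * u) \<in> R" for n
  proof (induction n)
    case 0
    then show ?case using additive_graph_zero[OF R] by simp
  next
    case (Suc n)
    show ?case
      using additive_graph_add[OF R xu Suc.IH] by (simp add: algebra_simps)
  qed
  show ?thesis
    using nat[of "nat i"] additive_graph_uminus[OF R nat[of "nat (- i)"]]
    by (auto simp: int_mult_def)
qed

lemma additive_graph_multiples:
  assumes R: "additive_graph R" and "(int_mult n a, u) \<in> R" "(int_mult j a, w) \<in> R"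
  shows "of_int n * w = of_int j * u"
proof -
  have "(int_mult n (int_mult j a), of_int n * w) \<in> R" "(int_mult j (int_mult n a), of_int j * u) \<in> R"
    using additive_graph_int_mult[OF R] assms(2,3) by blast+
  then show ?thesis
    using additive_graph_unique[OF R] int_mult_commute by metis
qed

lemma additive_graph_adjoin:
  assumes R: "additive_graph R" and v: "\<And>j w. (int_mult j a, w) \<in> R \<Longrightarrow> w = of_int j * v"
  shows "additive_graph {(x + int_mult m a, u + of_int m * v) | x u m. (x, u) \<in> R}"
    (is "additive_graph ?R'")
  unfolding additive_graph_def single_valued_def
proof (intro conjI allI impI)
  fix x u w
  assume "(x, u) \<in> ?R'" "(x, w) \<in> ?R'"
  then obtain x1 u1 m1 x2 u2 m2
    where 1: "(x1, u1) \<in> R" "x = x1 + int_mult m1 a" "u = u1 + of_int m1 * v"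
      and 2: "(x2, u2) \<in> R" "x = x2 + int_mult m2 a" "w = u2 + of_int m2 * v"
    by blast
  have x1: "x1 = x - int_mult m1 a" and x2: "x2 = x - int_mult m2 a"
    using 1(2) 2(2) by (simp_all only: eq_diff_eq)
  have "x1 + - x2 = int_mult (m2 - m1) a"
    unfolding x1 x2 diff_conv_add_uminus int_mult_add int_mult_uminus by (simp add: algebra_simps)
  then have "(int_mult (m2 - m1) a, u1 + - u2) \<in> R"
    using additive_graph_add[OF R 1(1) additive_graph_uminus[OF R 2(1)]] by simp
  then have "u1 + - u2 = of_int (m2 - m1) * v"
    by (rule v)
  then show "u = w"
    using 1 2 by (simp add: algebra_simps)
next
  show "(0, 0) \<in> ?R'"
    using additive_graph_zero[OF R] by force
next
  fix x y u w
  assume "(x, u) \<in> ?R'" "(y, w) \<in> ?R'"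
  then obtain x1 u1 m1 x2 u2 m2
    where 1: "(x1, u1) \<in> R" "x = x1 + int_mult m1 a" "u = u1 + of_int m1 * v"
      and 2: "(x2, u2) \<in> R" "y = x2 + int_mult m2 a" "w = u2 + of_int m2 * v"
    by blast
  have "(x1 + x2, u1 + u2) \<in> R"
    by (rule additive_graph_add[OF R 1(1) 2(1)])
  then show "(x + y, u + w) \<in> ?R'"
    unfolding 1(2,3) 2(2,3)
    by (intro CollectI exI[of _ "x1 + x2"] exI[of _ "u1 + u2"] exI[of _ "m1 + m2"])
      (simp add: int_mult_add algebra_simps)
next
  fix x u
  assume "(x, u) \<in> ?R'"
  then obtain x1 u1 m1 where 1: "(x1, u1) \<in> R" "x = x1 + int_mult m1 a" "u = u1 + of_int m1 * v"
    by blast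
  have "(- x1, - u1) \<in> R"
    by (rule additive_graph_uminus[OF R 1(1)])
  then show "(- x, - u) \<in> ?R'"
    unfolding 1(2,3)
    by (intro CollectI exI[of _ "- x1"] exI[of _ "- u1"] exI[of _ "- m1"]) (simp add: int_mult_uminus)
qed

text \<open>The value at \<open>a\<close> is forced as soon as some multiple \<open>n a\<close> (\<open>n \<noteq> 0\<close>) lies in the
  domain: it is the value at \<open>n a\<close> divided by \<open>n\<close>. This is where divisibility of \<open>\<real>\<close>
  enters.\<close>
lemma additive_graph_value_on_multiples:
  assumes R: "additive_graph R"
  obtains v where "\<And>j w. (int_mult j a, w) \<in> R \<Longrightarrow> w = of_int j * v"
proof (cases "\<exists>n u. n \<noteq> 0 \<and> (int_mult n a, u) \<in> R")
  case True
  then obtain n u where n: "n \<noteq> 0" and nu: "(int_mult n a, u) \<in> R"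
    by blast
  have "w = of_int j * (u / of_int n)" if "(int_mult j a, w) \<in> R" for j w
  proof -
    have "of_int n * w = of_int j * u"
      by (rule additive_graph_multiples[OF R nu that])
    then show ?thesis
      using n by (simp add: field_simps)
  qed
  then show ?thesis
    by (rule that)
next
  case False
  have "w = of_int j * 0" if "(int_mult j a, w) \<in> R" for j w
  proof -
    have "j = 0"
      using False that by blast
    then show ?thesis
      using that additive_graph_zero[OF R] additive_graph_unique[OF R] by auto
  qed
  then show ?thesis
    by (rule that)
qed

lemma additive_graph_extend:
  assumes R: "additive_graph R" and a: "a \<notin> Domain R"
  shows "\<exists>R'. additive_graph R' \<and> R \<subset> R'"
proof -
  obtain v where v: "\<And>j w. (int_mult j a, w) \<in> R \<Longrightarrow> w = of_int j * v"
    using additive_graph_value_on_multiples[OF R] by blast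
  define R' where "R' = {(x + int_mult m a, u + of_int m * v) | x u m. (x, u) \<in> R}"
  have "R \<subseteq> R'"
  proof
    fix p
    assume "p \<in> R"
    then show "p \<in> R'"
      unfolding R'_def by (intro CollectI exI[of _ "fst p"] exI[of _ "snd p"] exI[of _ 0]) simp
  qed
  moreover have "(a, v) \<in> R'"
    unfolding R'_def using additive_graph_zero[OF R]
    by (intro CollectI exI[of _ 0] exI[of _ 0] exI[of _ 1]) simp
  moreover have "(a, v) \<notin> R"
    using a by (auto intro: DomainI)
  moreover have "additive_graph R'"
    unfolding R'_def by (rule additive_graph_adjoin[OF R v])
  ultimately show ?thesis
    by blast
qed

lemma additive_graph_Union_chain:
  assumes "C \<noteq> {}" "\<And>R. R \<in> C \<Longrightarrow> additive_graph R"
    and "\<And>R S. R \<in> C \<Longrightarrow> S \<in> C \<Longrightarrow> R \<subseteq> S \<or> S \<subseteq> R"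
  shows "additive_graph (\<Union>C)"
  unfolding additive_graph_def single_valued_def
proof (intro conjI allI impI)
  fix x u v
  assume "(x, u) \<in> \<Union>C" "(x, v) \<in> \<Union>C"
  then obtain R S where "R \<in> C" "S \<in> C" "(x, u) \<in> R" "(x, v) \<in> S"
    by blast
  then show "u = v"
    using assms(2)[of R] assms(2)[of S] assms(3)[of R S] additive_graph_unique by blast
next
  show "(0, 0) \<in> \<Union>C"
    using assms(1,2) additive_graph_zero by blast
next
  fix x y u v
  assume "(x, u) \<in> \<Union>C" "(y, v) \<in> \<Union>C"
  then obtain R S where "R \<in> C" "S \<in> C" "(x, u) \<in> R" "(y, v) \<in> S"
    by blast
  then show "(x + y, u + v) \<in> \<Union>C"
    using assms(2)[of R] assms(2)[of S] assms(3)[of R S] additive_graph_add by blast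
next
  fix x u
  assume "(x, u) \<in> \<Union>C"
  then show "(- x, - u) \<in> \<Union>C"
    using assms(2) additive_graph_uminus by blast
qed

lemma exists_total_additive_graph:
  assumes "additive_graph R0"
  obtains M where "additive_graph M" "R0 \<subseteq> M" "Domain M = UNIV"
proof -
  define A where "A = {R. additive_graph R \<and> R0 \<subseteq> R}"
  have "\<exists>U\<in>A. \<forall>X\<in>C. X \<subseteq> U" if C: "C \<in> chains A" for C
  proof (cases "C = {}")
    case True
    then show ?thesis
      using assms unfolding A_def by blast
  next
    case False
    have "additive_graph (\<Union>C)"
      using False C by (intro additive_graph_Union_chain) (auto simp: A_def chains_def chain_subset_def)
    moreover have "R0 \<subseteq> \<Union>C"
      using False C unfolding A_def chains_def by blast
    ultimately show ?thesis
      unfolding A_def by blast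
  qed
  then obtain M where M: "M \<in> A" "\<forall>X\<in>A. M \<subseteq> X \<longrightarrow> X = M"
    using Zorn_Lemma2[of A] by blast
  have "Domain M = UNIV"
  proof (rule ccontr)
    assume "Domain M \<noteq> UNIV"
    then obtain a where "a \<notin> Domain M"
      by blast
    then show False
      using additive_graph_extend[of M a] M unfolding A_def by blast
  qed
  then show ?thesis
    using M(1) that unfolding A_def by blast
qed

lemma additive_graph_int_multiples:
  fixes \<xi> :: "'a::linordered_ab_group_add"
  assumes "\<xi> \<noteq> 0"
  shows "additive_graph {(int_mult n \<xi>, of_int n :: real) | n. True}" (is "additive_graph ?R")
  unfolding additive_graph_def single_valued_def
proof (intro conjI allI impI)
  fix x u v
  assume "(x, u) \<in> ?R" "(x, v) \<in> ?R"
  then obtain n m where "x = int_mult n \<xi>" "u = of_int n" "x = int_mult m \<xi>" "v = of_int m"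
    by blast
  moreover from this have "int_mult (n - m) \<xi> = 0"
    by (simp add: int_mult_add[of n "- m", simplified] int_mult_uminus)
  ultimately show "u = v"
    using int_mult_eq_0D assms by fastforce
next
  show "(0, 0) \<in> ?R"
    by (intro CollectI exI[of _ 0]) simp
next
  fix x y u v
  assume "(x, u) \<in> ?R" "(y, v) \<in> ?R"
  then obtain n m where "x = int_mult n \<xi>" "u = of_int n" "y = int_mult m \<xi>" "v = of_int m"
    by blast
  then show "(x + y, u + v) \<in> ?R"
    by (intro CollectI exI[of _ "n + m"]) (simp add: int_mult_add)
next
  fix x u
  assume "(x, u) \<in> ?R"
  then obtain n where "x = int_mult n \<xi>" "u = of_int n"
    by blast
  then show "(- x, - u) \<in> ?R"
    by (intro CollectI exI[of _ "- n"]) (simp add: int_mult_uminus)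
qed

lemma exists_additive_real_fun:
  fixes \<xi> :: "'a::linordered_ab_group_add"
  assumes "\<xi> \<noteq> 0"
  obtains f :: "'a \<Rightarrow> real" where "\<And>x y. f (x + y) = f x + f y" "f \<xi> = 1"
proof -
  obtain M where M: "additive_graph M" "{(int_mult n \<xi>, of_int n) | n. True} \<subseteq> M" "Domain M = UNIV"
    using exists_total_additive_graph[OF additive_graph_int_multiples[OF assms]] by blast
  define f where "f x = (THE u. (x, u) \<in> M)" for x
  have f: "(x, f x) \<in> M" for x
    using M(3) additive_graph_unique[OF M(1)] unfolding f_def by (metis DomainE UNIV_I theI)
  have "(\<xi>, 1) \<in> M"
    using M(2) by (force intro: exI[of _ 1])
  then show ?thesis
    using that additive_graph_add[OF M(1) f f] additive_graph_unique[OF M(1)] f by blast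
qed

lemma exp_i_neq_1: "exp \<i> \<noteq> (1 :: complex)"
proof
  assume "exp \<i> = 1"
  then obtain n :: int where n: "1 = of_int (2 * n) * pi"
    by (auto simp: exp_eq_1)
  then have "n \<noteq> 0"
    by auto
  then have "pi \<le> \<bar>of_int (2 * n)\<bar> * pi"
    by simp
  also have "\<dots> = 1"
    using n by (metis abs_mult abs_of_nonneg abs_one pi_ge_zero)
  finally show False
    using pi_gt3 by simp
qed

lemma dual_group_separates:
  fixes \<xi> :: "'x::linordered_ab_group_add"
  assumes "\<xi> \<noteq> 0"
  obtains \<gamma> where "\<gamma> \<in> dual_group" "\<gamma> \<xi> \<noteq> 1"
proof -
  obtain f :: "'x \<Rightarrow> real" where f: "\<And>x y. f (x + y) = f x + f y" "f \<xi> = 1"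
    using exists_additive_real_fun[OF assms] by blast
  define \<gamma> where "\<gamma> x = exp (\<i> * complex_of_real (f x))" for x
  have "\<gamma> \<in> dual_group"
    unfolding dual_group_def \<gamma>_def by (auto simp: f(1) distrib_left exp_add norm_exp_i_times)
  moreover have "\<gamma> \<xi> \<noteq> 1"
    unfolding \<gamma>_def f(2) using exp_i_neq_1 by simp
  ultimately show ?thesis
    using that by blast
qed

lemma dual_group_add: "\<omega> \<in> dual_group \<Longrightarrow> \<omega> (a + b) = \<omega> a * \<omega> b"
  unfolding dual_group_def by blast

lemma dual_group_norm: "\<omega> \<in> dual_group \<Longrightarrow> cmod (\<omega> a) = 1"
  unfolding dual_group_def by blast

lemma dual_group_zero: "\<omega> \<in> dual_group \<Longrightarrow> \<omega> 0 = 1"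
  using dual_group_add[of \<omega> 0 0] dual_group_norm[of \<omega> 0] by (metis add_0 mult_cancel_left2 norm_zero zero_neq_one)

lemma dual_group_mult_cnj: "\<omega> \<in> dual_group \<Longrightarrow> \<omega> a * cnj (\<omega> a) = 1"
  using dual_group_norm[of \<omega> a] by (metis complex_norm_square of_real_1 power_one)

lemma dual_group_uminus: "\<omega> \<in> dual_group \<Longrightarrow> \<omega> (- a) = cnj (\<omega> a)"
  using dual_group_add[of \<omega> a "- a"] dual_group_zero[of \<omega>] dual_group_mult_cnj[of \<omega> a]
  by (metis add.right_inverse mult.commute mult_1_left mult.assoc)

lemma dual_group_diff: "\<omega> \<in> dual_group \<Longrightarrow> \<omega> (a - b) = \<omega> a * cnj (\<omega> b)"
  using dual_group_add[of \<omega> a "- b"] dual_group_uminus[of \<omega> b] by simp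

section \<open>Square-summable functions on the group\<close>

lemma norm_add_squared_le:
  fixes a b :: "'a::real_normed_vector"
  shows "(norm (a + b))\<^sup>2 \<le> 2 * (norm a)\<^sup>2 + 2 * (norm b)\<^sup>2"
proof -
  have "(norm (a + b))\<^sup>2 \<le> (norm a + norm b)\<^sup>2"
    by (simp add: norm_triangle_ineq power_mono)
  also have "\<dots> \<le> 2 * (norm a)\<^sup>2 + 2 * (norm b)\<^sup>2"
    using zero_le_power2[of "norm a - norm b"] by (simp add: power2_eq_square algebra_simps)
  finally show ?thesis .
qed

definition l2 :: "('x \<Rightarrow> complex) set" where
  "l2 = {g. (\<lambda>\<xi>. (cmod (g \<xi>))\<^sup>2) summable_on UNIV}"

lemma l2_plus_iff: "g \<in> l2_plus \<longleftrightarrow> (\<forall>\<xi>. \<not> 0 \<le> \<xi> \<longrightarrow> g \<xi> = 0) \<and> g \<in> l2"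
  unfolding l2_plus_def l2_def by blast

lemma l2_plus_imp_l2: "g \<in> l2_plus \<Longrightarrow> g \<in> l2"
  unfolding l2_plus_iff by blast

lemma l2_finite_sum_le: "g \<in> l2 \<Longrightarrow> finite F \<Longrightarrow> (\<Sum>\<xi>\<in>F. (cmod (g \<xi>))\<^sup>2) \<le> (\<Sum>\<^sub>\<infinity>\<xi>. (cmod (g \<xi>))\<^sup>2)"
  unfolding l2_def by (intro finite_sum_le_infsum) auto

lemma l2_finite_sums_bounded:
  assumes "\<And>F. finite F \<Longrightarrow> (\<Sum>\<xi>\<in>F. (cmod (g \<xi>))\<^sup>2) \<le> B"
  shows "g \<in> l2" "(\<Sum>\<^sub>\<infinity>\<xi>. (cmod (g \<xi>))\<^sup>2) \<le> B"
proof -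
  show l2: "g \<in> l2"
    unfolding l2_def
    by (rule CollectI, rule nonneg_bdd_above_summable_on) (auto intro!: bdd_aboveI[where M = B] assms)
  show "(\<Sum>\<^sub>\<infinity>\<xi>. (cmod (g \<xi>))\<^sup>2) \<le> B"
    by (rule infsum_le_finite_sums) (use l2 assms in \<open>auto simp: l2_def\<close>)
qed

lemma l2_infsum_nonneg: "0 \<le> (\<Sum>\<^sub>\<infinity>\<xi>. (cmod (g \<xi>))\<^sup>2)"
  by (rule infsum_nonneg) auto

lemma l2_norm_squared: "(l2_norm g)\<^sup>2 = (\<Sum>\<^sub>\<infinity>\<xi>. (cmod (g \<xi>))\<^sup>2)"
  unfolding l2_norm_def using l2_infsum_nonneg by simp

lemma l2_norm_nonneg: "0 \<le> l2_norm g"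
  unfolding l2_norm_def using l2_infsum_nonneg by simp

lemma norm_le_l2_norm:
  assumes "g \<in> l2"
  shows "cmod (g \<xi>) \<le> l2_norm g"
proof -
  have "(cmod (g \<xi>))\<^sup>2 \<le> (\<Sum>\<^sub>\<infinity>\<xi>. (cmod (g \<xi>))\<^sup>2)"
    using l2_finite_sum_le[OF assms, of "{\<xi>}"] by simp
  then show ?thesis
    unfolding l2_norm_def by (simp add: real_le_rsqrt)
qed

lemma l2_norm_le:
  assumes "\<And>F. finite F \<Longrightarrow> (\<Sum>\<xi>\<in>F. (cmod (g \<xi>))\<^sup>2) \<le> B\<^sup>2" "0 \<le> B"
  shows "l2_norm g \<le> B"
proof -
  have "sqrt (\<Sum>\<^sub>\<infinity>\<xi>. (cmod (g \<xi>))\<^sup>2) \<le> sqrt (B\<^sup>2)"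
    using l2_finite_sums_bounded(2)[OF assms(1)] by (rule real_sqrt_le_mono)
  then show ?thesis
    unfolding l2_norm_def using assms(2) by simp
qed

lemma l2_norm_cmult:
  assumes "g \<in> l2"
  shows "l2_norm (\<lambda>\<xi>. c * g \<xi>) = cmod c * l2_norm g"
proof -
  have "(\<lambda>\<xi>. (cmod (g \<xi>))\<^sup>2) summable_on UNIV"
    using assms unfolding l2_def by blast
  then have "(\<Sum>\<^sub>\<infinity>\<xi>. (cmod c)\<^sup>2 * (cmod (g \<xi>))\<^sup>2) = (cmod c)\<^sup>2 * (\<Sum>\<^sub>\<infinity>\<xi>. (cmod (g \<xi>))\<^sup>2)"
    by (rule infsum_cmult_right)
  then show ?thesis
    unfolding l2_norm_def by (simp add: norm_mult power_mult_distrib real_sqrt_mult)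
qed

lemma l2_linear_comb:
  assumes "f \<in> l2" "g \<in> l2"
  shows "(\<lambda>\<xi>. a * f \<xi> + b * g \<xi>) \<in> l2"
  unfolding l2_def mem_Collect_eq
proof (rule summable_on_comparison_test)
  show "(\<lambda>\<xi>. 2 * (cmod a)\<^sup>2 * (cmod (f \<xi>))\<^sup>2 + 2 * (cmod b)\<^sup>2 * (cmod (g \<xi>))\<^sup>2) summable_on UNIV"
    using assms unfolding l2_def by (intro summable_on_add summable_on_cmult_right) auto
  fix \<xi>
  show "(cmod (a * f \<xi> + b * g \<xi>))\<^sup>2 \<le> 2 * (cmod a)\<^sup>2 * (cmod (f \<xi>))\<^sup>2 + 2 * (cmod b)\<^sup>2 * (cmod (g \<xi>))\<^sup>2"
    using norm_add_squared_le[of "a * f \<xi>" "b * g \<xi>"] by (simp add: norm_mult power_mult_distrib)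
qed simp

lemma l2_mult_summable:
  assumes "f \<in> l2" "g \<in> l2"
  shows "(\<lambda>\<eta>. f \<eta> * g \<eta>) summable_on UNIV"
proof (rule abs_summable_summable, rule summable_on_comparison_test)
  show "(\<lambda>\<eta>. (cmod (f \<eta>))\<^sup>2 + (cmod (g \<eta>))\<^sup>2) summable_on UNIV"
    using assms unfolding l2_def by (intro summable_on_add) auto
  fix \<eta>
  have "cmod (f \<eta>) * cmod (g \<eta>) \<le> (cmod (f \<eta>))\<^sup>2 + (cmod (g \<eta>))\<^sup>2"
    using sum_squares_bound[of "cmod (f \<eta>)" "cmod (g \<eta>)"]
      mult_nonneg_nonneg[OF norm_ge_zero norm_ge_zero, of "f \<eta>" "g \<eta>"] by linarith
  then show "cmod (f \<eta> * g \<eta>) \<le> (cmod (f \<eta>))\<^sup>2 + (cmod (g \<eta>))\<^sup>2"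
    by (simp add: norm_mult)
qed simp

lemma l2_reflect:
  fixes c :: "'x::ab_group_add \<Rightarrow> complex"
  assumes "c \<in> l2"
  shows "(\<lambda>\<eta>. c (\<xi> - \<eta>)) \<in> l2"
proof -
  have "(\<lambda>\<eta>. (cmod (c (\<xi> - \<eta>)))\<^sup>2) summable_on UNIV \<longleftrightarrow> (\<lambda>\<eta>. (cmod (c \<eta>))\<^sup>2) summable_on UNIV"
    by (rule summable_on_reindex_bij_witness[where i = "\<lambda>\<eta>. \<xi> - \<eta>" and j = "\<lambda>\<eta>. \<xi> - \<eta>"]) simp_all
  then show ?thesis
    using assms unfolding l2_def by simp
qed

lemma conv_summable:
  fixes c :: "'x::ab_group_add \<Rightarrow> complex"
  shows "c \<in> l2 \<Longrightarrow> g \<in> l2 \<Longrightarrow> (\<lambda>\<eta>. c (\<xi> - \<eta>) * g \<eta>) summable_on UNIV"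
  by (rule l2_mult_summable[OF l2_reflect])

lemma conv_tendsto:
  assumes "c \<in> l2" "g \<in> l2"
  shows "((\<lambda>F. \<Sum>\<eta>\<in>F. c (\<xi> - \<eta>) * g \<eta>) \<longlongrightarrow> conv c g \<xi>) (finite_subsets_at_top UNIV)"
  using conv_summable[OF assms, of \<xi>] unfolding conv_def summable_iff_has_sum_infsum has_sum_def .

lemma conv_linear_right:
  assumes "c \<in> l2" "f \<in> l2" "g \<in> l2"
  shows "conv c (\<lambda>\<xi>. a * f \<xi> + b * g \<xi>) \<xi> = a * conv c f \<xi> + b * conv c g \<xi>"
proof -
  have "conv c (\<lambda>\<xi>. a * f \<xi> + b * g \<xi>) \<xi>
      = (\<Sum>\<^sub>\<infinity>\<eta>. a * (c (\<xi> - \<eta>) * f \<eta>) + b * (c (\<xi> - \<eta>) * g \<eta>))"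
    unfolding conv_def by (simp add: algebra_simps)
  also have "\<dots> = (\<Sum>\<^sub>\<infinity>\<eta>. a * (c (\<xi> - \<eta>) * f \<eta>)) + (\<Sum>\<^sub>\<infinity>\<eta>. b * (c (\<xi> - \<eta>) * g \<eta>))"
    by (intro infsum_add summable_on_cmult_right conv_summable assms)
  also have "\<dots> = a * conv c f \<xi> + b * conv c g \<xi>"
    unfolding conv_def by (simp add: infsum_cmult_right conv_summable assms)
  finally show ?thesis .
qed

lemma conv_linear_left:
  assumes "c \<in> l2" "d \<in> l2" "g \<in> l2"
  shows "conv (\<lambda>\<zeta>. a * c \<zeta> + b * d \<zeta>) g \<xi> = a * conv c g \<xi> + b * conv d g \<xi>"
proof -
  have "conv (\<lambda>\<zeta>. a * c \<zeta> + b * d \<zeta>) g \<xi>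
      = (\<Sum>\<^sub>\<infinity>\<eta>. a * (c (\<xi> - \<eta>) * g \<eta>) + b * (d (\<xi> - \<eta>) * g \<eta>))"
    unfolding conv_def by (simp add: algebra_simps)
  also have "\<dots> = (\<Sum>\<^sub>\<infinity>\<eta>. a * (c (\<xi> - \<eta>) * g \<eta>)) + (\<Sum>\<^sub>\<infinity>\<eta>. b * (d (\<xi> - \<eta>) * g \<eta>))"
    by (intro infsum_add summable_on_cmult_right conv_summable assms)
  also have "\<dots> = a * conv c g \<xi> + b * conv d g \<xi>"
    unfolding conv_def by (simp add: infsum_cmult_right conv_summable assms)
  finally show ?thesis .
qed

lemma conv_finite_support:
  assumes "finite F" "\<And>\<eta>. \<eta> \<notin> F \<Longrightarrow> g \<eta> = 0"
  shows "conv c g \<xi> = (\<Sum>\<eta>\<in>F. c (\<xi> - \<eta>) * g \<eta>)"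
proof -
  have "conv c g \<xi> = infsum (\<lambda>\<eta>. c (\<xi> - \<eta>) * g \<eta>) F"
    unfolding conv_def by (rule infsum_cong_neutral) (use assms in auto)
  then show ?thesis
    using assms(1) by simp
qed

lemma conv_delta: "conv (\<lambda>\<zeta>. if \<zeta> = 0 then c else 0) g \<xi> = c * g \<xi>"
proof -
  have "conv (\<lambda>\<zeta>. if \<zeta> = 0 then c else 0) g \<xi> = infsum (\<lambda>\<eta>. (if \<xi> - \<eta> = 0 then c else 0) * g \<eta>) {\<xi>}"
    unfolding conv_def by (rule infsum_cong_neutral) auto
  then show ?thesis
    by simp
qed

lemma l2_plus_linear_comb: "f \<in> l2_plus \<Longrightarrow> g \<in> l2_plus \<Longrightarrow> (\<lambda>\<xi>. a * f \<xi> + b * g \<xi>) \<in> l2_plus"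
  unfolding l2_plus_iff using l2_linear_comb by auto

lemma l2_plus_cmult: "g \<in> l2_plus \<Longrightarrow> (\<lambda>\<xi>. c * g \<xi>) \<in> l2_plus"
  using l2_plus_linear_comb[of g g c 0] by simp

lemma l2_plus_sum:
  "finite A \<Longrightarrow> (\<And>n. n \<in> A \<Longrightarrow> f n \<in> l2_plus) \<Longrightarrow> (\<lambda>\<xi>. \<Sum>n\<in>A. f n \<xi>) \<in> l2_plus"
proof (induction A rule: finite_induct)
  case empty
  then show ?case by (simp add: l2_plus_iff l2_def)
next
  case (insert x F)
  then show ?case using l2_plus_linear_comb[of "f x" "\<lambda>\<xi>. \<Sum>n\<in>F. f n \<xi>" 1 1] by simp
qed

lemma L2_set_le_l2_norm: "g \<in> l2 \<Longrightarrow> finite F \<Longrightarrow> L2_set (\<lambda>\<xi>. cmod (g \<xi>)) F \<le> l2_norm g"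
  unfolding L2_set_def l2_norm_def by (intro real_sqrt_le_mono l2_finite_sum_le)

lemma l2_L2_set_bounded:
  assumes "\<And>F. finite F \<Longrightarrow> L2_set (\<lambda>\<xi>. cmod (g \<xi>)) F \<le> B" "0 \<le> B"
  shows "g \<in> l2" "l2_norm g \<le> B"
proof -
  have fin: "(\<Sum>\<xi>\<in>F. (cmod (g \<xi>))\<^sup>2) \<le> B\<^sup>2" if "finite F" for F
  proof -
    have "sqrt (\<Sum>\<xi>\<in>F. (cmod (g \<xi>))\<^sup>2) \<le> B"
      using assms(1)[OF that] unfolding L2_set_def .
    then show ?thesis
      by (metis assms(2) real_le_rsqrt real_sqrt_le_iff sqrt_le_D)
  qed
  show "g \<in> l2"
    using l2_finite_sums_bounded(1)[OF fin] .
  show "l2_norm g \<le> B"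
    using fin assms(2) by (intro l2_norm_le) auto
qed

section \<open>Essentially bounded functions and the inner product of \<open>L\<^sub>2\<close>\<close>

lemma borel_measurable_cnj [measurable]:
  "f \<in> borel_measurable M \<Longrightarrow> (\<lambda>x. cnj (f x)) \<in> borel_measurable M"
  by (rule measurable_compose[of f M borel cnj]) (auto intro!: borel_measurable_continuous_onI continuous_intros)

definition ess_bounded :: "'a measure \<Rightarrow> ('a \<Rightarrow> complex) \<Rightarrow> bool" where
  "ess_bounded M f \<longleftrightarrow> f \<in> borel_measurable M \<and> (\<exists>B. AE x in M. cmod (f x) \<le> B)"

lemma ess_bounded_measurable: "ess_bounded M f \<Longrightarrow> f \<in> borel_measurable M"
  unfolding ess_bounded_def by blast

lemma ess_boundedE:
  assumes "ess_bounded M f"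
  obtains B where "0 \<le> B" "AE x in M. cmod (f x) \<le> B"
proof -
  obtain B where "AE x in M. cmod (f x) \<le> B"
    using assms unfolding ess_bounded_def by blast
  then have "AE x in M. cmod (f x) \<le> max B 0"
    by (auto elim: AE_mp)
  then show ?thesis
    using that[of "max B 0"] by simp
qed

lemma ess_boundedI:
  "f \<in> borel_measurable M \<Longrightarrow> (\<And>x. x \<in> space M \<Longrightarrow> cmod (f x) \<le> B) \<Longrightarrow> ess_bounded M f"
  unfolding ess_bounded_def by (blast intro: AE_I2)

lemma ess_bounded_const: "ess_bounded M (\<lambda>x. c)"
  by (rule ess_boundedI[where B = "cmod c"]) auto

lemma ess_bounded_add: "ess_bounded M f \<Longrightarrow> ess_bounded M g \<Longrightarrow> ess_bounded M (\<lambda>x. f x + g x)"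
proof -
  assume f: "ess_bounded M f" and g: "ess_bounded M g"
  obtain B1 B2 where "AE x in M. cmod (f x) \<le> B1" "AE x in M. cmod (g x) \<le> B2"
    using f g by (metis ess_boundedE)
  then have "AE x in M. cmod (f x + g x) \<le> B1 + B2"
    by eventually_elim (metis add_mono norm_triangle_le)
  then show ?thesis
    using f g unfolding ess_bounded_def by auto
qed

lemma ess_bounded_mult: "ess_bounded M f \<Longrightarrow> ess_bounded M g \<Longrightarrow> ess_bounded M (\<lambda>x. f x * g x)"
proof -
  assume f: "ess_bounded M f" and g: "ess_bounded M g"
  obtain B1 where B1: "0 \<le> B1" "AE x in M. cmod (f x) \<le> B1"
    using f by (rule ess_boundedE)
  obtain B2 where B2: "AE x in M. cmod (g x) \<le> B2"
    using g by (rule ess_boundedE)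
  have "AE x in M. cmod (f x * g x) \<le> B1 * B2"
    using B1(2) B2 by eventually_elim (simp add: norm_mult mult_mono B1(1))
  then show ?thesis
    using f g unfolding ess_bounded_def by auto
qed

lemma ess_bounded_cnj: "ess_bounded M f \<Longrightarrow> ess_bounded M (\<lambda>x. cnj (f x))"
  unfolding ess_bounded_def by auto

lemma ess_bounded_cmult: "ess_bounded M f \<Longrightarrow> ess_bounded M (\<lambda>x. c * f x)"
  using ess_bounded_mult[OF ess_bounded_const] by blast

lemma ess_bounded_diff: "ess_bounded M f \<Longrightarrow> ess_bounded M g \<Longrightarrow> ess_bounded M (\<lambda>x. f x - g x)"
  using ess_bounded_add[OF _ ess_bounded_cmult[of M g "- 1"]] by simp

lemma ess_bounded_sum:
  "finite F \<Longrightarrow> (\<And>i. i \<in> F \<Longrightarrow> ess_bounded M (f i)) \<Longrightarrow> ess_bounded M (\<lambda>x. \<Sum>i\<in>F. f i x)"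
  by (induction F rule: finite_induct) (auto intro: ess_bounded_const ess_bounded_add)

definition L2_inner :: "'a measure \<Rightarrow> ('a \<Rightarrow> complex) \<Rightarrow> ('a \<Rightarrow> complex) \<Rightarrow> complex" where
  "L2_inner M f g = (LINT x|M. f x * cnj (g x))"

definition L2_sqnorm :: "'a measure \<Rightarrow> ('a \<Rightarrow> complex) \<Rightarrow> real" where
  "L2_sqnorm M f = (LINT x|M. (cmod (f x))\<^sup>2)"

lemma L2_sqnorm_nonneg: "0 \<le> L2_sqnorm M f"
  unfolding L2_sqnorm_def by simp

lemma L2_sqnorm_cong:
  "(\<And>x. x \<in> space M \<Longrightarrow> cmod (f x) = cmod (g x)) \<Longrightarrow> L2_sqnorm M f = L2_sqnorm M g"
  unfolding L2_sqnorm_def by (rule Bochner_Integration.integral_cong) auto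

lemma L2_sqnorm_diff_commute: "L2_sqnorm M (\<lambda>x. f x - g x) = L2_sqnorm M (\<lambda>x. g x - f x)"
  by (rule L2_sqnorm_cong) (simp add: norm_minus_commute)

lemma L2_sqnorm_cmult: "L2_sqnorm M (\<lambda>x. c * f x) = (cmod c)\<^sup>2 * L2_sqnorm M f"
  unfolding L2_sqnorm_def by (simp add: norm_mult power_mult_distrib)

lemma L2_inner_cnj_commute: "L2_inner M g f = cnj (L2_inner M f g)"
proof -
  have "L2_inner M g f = (LINT x|M. cnj (f x * cnj (g x)))"
    unfolding L2_inner_def by (simp add: mult.commute)
  then show ?thesis
    unfolding L2_inner_def by (simp only: Bochner_Integration.integral_cnj)
qed

lemma L2_inner_cmult_left: "L2_inner M (\<lambda>x. c * f x) g = c * L2_inner M f g"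
  unfolding L2_inner_def by (simp add: mult.assoc)

lemma L2_inner_cmult_right: "L2_inner M f (\<lambda>x. c * g x) = cnj c * L2_inner M f g"
  using L2_inner_cmult_left[of M c g f] by (simp add: L2_inner_cnj_commute[of M f])

lemma L2_inner_self: "L2_inner M f f = complex_of_real (L2_sqnorm M f)"
  unfolding L2_inner_def L2_sqnorm_def complex_norm_square[symmetric]
  by (rule integral_complex_of_real)

context finite_measure
begin

lemma ess_bounded_integrable: "ess_bounded M f \<Longrightarrow> integrable M f"
  unfolding ess_bounded_def using integrable_const_bound by blast

lemma ess_bounded_integrable_norm_squared:
  assumes "ess_bounded M f"
  shows "integrable M (\<lambda>x. (cmod (f x))\<^sup>2)"
proof -
  obtain B where B: "0 \<le> B" "AE x in M. cmod (f x) \<le> B"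
    using assms by (rule ess_boundedE)
  have "AE x in M. norm ((cmod (f x))\<^sup>2) \<le> B\<^sup>2"
    using B(2) by eventually_elim (simp add: power_mono)
  then show ?thesis
    using assms unfolding ess_bounded_def by (intro integrable_const_bound) auto
qed

lemma L2_inner_add_left:
  "ess_bounded M f \<Longrightarrow> ess_bounded M f' \<Longrightarrow> ess_bounded M g \<Longrightarrow>
    L2_inner M (\<lambda>x. f x + f' x) g = L2_inner M f g + L2_inner M f' g"
  unfolding L2_inner_def distrib_right
  by (intro Bochner_Integration.integral_add ess_bounded_integrable ess_bounded_mult ess_bounded_cnj)

lemma L2_inner_diff_left:
  "ess_bounded M f \<Longrightarrow> ess_bounded M f' \<Longrightarrow> ess_bounded M g \<Longrightarrow>
    L2_inner M (\<lambda>x. f x - f' x) g = L2_inner M f g - L2_inner M f' g"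
  using L2_inner_add_left[of f "\<lambda>x. - f' x" g] L2_inner_cmult_left[of M "- 1" f' g]
    ess_bounded_cmult[of M f' "- 1"] by simp

lemma L2_inner_diff_right:
  "ess_bounded M f \<Longrightarrow> ess_bounded M g \<Longrightarrow> ess_bounded M g' \<Longrightarrow>
    L2_inner M f (\<lambda>x. g x - g' x) = L2_inner M f g - L2_inner M f g'"
  using L2_inner_diff_left[of g g' f] by (simp add: L2_inner_cnj_commute[of M f])

lemma L2_inner_sum_left:
  "finite F \<Longrightarrow> (\<And>i. i \<in> F \<Longrightarrow> ess_bounded M (f i)) \<Longrightarrow> ess_bounded M g \<Longrightarrow>
    L2_inner M (\<lambda>x. \<Sum>i\<in>F. f i x) g = (\<Sum>i\<in>F. L2_inner M (f i) g)"
  unfolding L2_inner_def sum_distrib_right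
  by (subst Bochner_Integration.integral_sum)
    (auto intro!: ess_bounded_integrable ess_bounded_mult ess_bounded_cnj)

lemma L2_inner_sum_right:
  "finite F \<Longrightarrow> (\<And>i. i \<in> F \<Longrightarrow> ess_bounded M (g i)) \<Longrightarrow> ess_bounded M f \<Longrightarrow>
    L2_inner M f (\<lambda>x. \<Sum>i\<in>F. g i x) = (\<Sum>i\<in>F. L2_inner M f (g i))"
  using L2_inner_sum_left[of F g f] by (simp add: L2_inner_cnj_commute[of M f])

lemma L2_sqnorm_add_le:
  assumes "ess_bounded M f" "ess_bounded M g"
  shows "L2_sqnorm M (\<lambda>x. f x + g x) \<le> 2 * L2_sqnorm M f + 2 * L2_sqnorm M g"
proof -
  have "L2_sqnorm M (\<lambda>x. f x + g x) \<le> (LINT x|M. 2 * (cmod (f x))\<^sup>2 + 2 * (cmod (g x))\<^sup>2)"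
    unfolding L2_sqnorm_def using assms
    by (intro integral_mono ess_bounded_integrable_norm_squared ess_bounded_add
        Bochner_Integration.integrable_add integrable_mult_right norm_add_squared_le)
  also have "\<dots> = 2 * L2_sqnorm M f + 2 * L2_sqnorm M g"
    unfolding L2_sqnorm_def using assms by (simp add: ess_bounded_integrable_norm_squared)
  finally show ?thesis .
qed

lemma L2_sqnorm_mult_le:
  assumes "ess_bounded M f" "ess_bounded M \<phi>" and bound: "AE x in M. cmod (\<phi> x) \<le> B"
  shows "L2_sqnorm M (\<lambda>x. \<phi> x * f x) \<le> B\<^sup>2 * L2_sqnorm M f"
proof -
  have "L2_sqnorm M (\<lambda>x. \<phi> x * f x) \<le> (LINT x|M. B\<^sup>2 * (cmod (f x))\<^sup>2)"
    unfolding L2_sqnorm_def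
  proof (rule integral_mono_AE)
    show "integrable M (\<lambda>x. (cmod (\<phi> x * f x))\<^sup>2)" "integrable M (\<lambda>x. B\<^sup>2 * (cmod (f x))\<^sup>2)"
      using assms by (auto intro!: ess_bounded_integrable_norm_squared ess_bounded_mult)
    show "AE x in M. (cmod (\<phi> x * f x))\<^sup>2 \<le> B\<^sup>2 * (cmod (f x))\<^sup>2"
      using bound by eventually_elim (simp add: norm_mult power_mult_distrib mult_right_mono power_mono)
  qed
  then show ?thesis
    unfolding L2_sqnorm_def by simp
qed

end

section \<open>Haar measure, Fourier coefficients and Toeplitz operators\<close>

lemma cnj_mult_self: "cnj z * z = complex_of_real ((cmod z)\<^sup>2)"
  by (metis complex_norm_square mult.commute)

definition trig_poly :: "'x set \<Rightarrow> ('x \<Rightarrow> complex) \<Rightarrow> ('x \<Rightarrow> complex) \<Rightarrow> complex" where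
  "trig_poly F c \<omega> = (\<Sum>\<xi>\<in>F. c \<xi> * \<omega> \<xi>)"

locale dual_haar =
  fixes \<mu> :: "('x::linordered_ab_group_add \<Rightarrow> complex) measure"
  assumes haar_dual: "haar_dual \<mu>"
begin

sublocale prob_space \<mu>
  using haar_dual unfolding haar_dual_def by blast

lemma space_eq: "space \<mu> = dual_group"
  using haar_dual unfolding haar_dual_def by blast

lemma measurable_eval [measurable]: "(\<lambda>\<omega>. \<omega> \<xi>) \<in> borel_measurable \<mu>"
proof (rule measurableI)
  fix A :: "complex set"
  assume "A \<in> sets borel"
  then have "{\<omega> \<in> dual_group. \<omega> \<xi> \<in> A} \<in> sets \<mu>"
    using haar_dual unfolding haar_dual_def by (auto intro!: sigma_sets.Basic)
  then show "(\<lambda>\<omega>. \<omega> \<xi>) -` A \<inter> space \<mu> \<in> sets \<mu>"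
    by (simp add: space_eq Int_def conj_commute)
qed simp

lemma ess_bounded_eval: "ess_bounded \<mu> (\<lambda>\<omega>. \<omega> \<xi>)"
  by (rule ess_boundedI[where B = 1]) (auto simp: space_eq dual_group_norm)

lemma ess_bounded_trig_poly: "finite F \<Longrightarrow> ess_bounded \<mu> (trig_poly F c)"
  unfolding trig_poly_def by (intro ess_bounded_sum ess_bounded_cmult ess_bounded_eval)

lemma trig_poly_bound: "\<omega> \<in> space \<mu> \<Longrightarrow> cmod (trig_poly F c \<omega>) \<le> (\<Sum>\<xi>\<in>F. cmod (c \<xi>))"
  unfolding trig_poly_def
  by (auto intro!: order_trans[OF norm_sum] sum_mono simp: norm_mult dual_group_norm space_eq)

text \<open>Translation invariance: shifting by a character \<open>\<gamma>\<close> with \<open>\<gamma> \<xi> \<noteq> 1\<close> multiplies the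
  integral of \<open>\<omega> \<mapsto> \<omega> \<xi>\<close> by \<open>\<gamma> \<xi>\<close>.\<close>
lemma integral_eval: "(LINT \<omega>|\<mu>. \<omega> \<xi>) = (if \<xi> = 0 then 1 else 0)"
proof (cases "\<xi> = 0")
  case True
  have "(LINT \<omega>|\<mu>. \<omega> \<xi>) = (LINT \<omega>|\<mu>. 1)"
    by (rule Bochner_Integration.integral_cong) (auto simp: space_eq True dual_group_zero)
  then show ?thesis
    using True by (simp add: prob_space)
next
  case False
  obtain \<gamma> where \<gamma>: "\<gamma> \<in> dual_group" "\<gamma> \<xi> \<noteq> 1"
    using dual_group_separates[OF False] by blast
  define T where "T = (\<lambda>(\<omega>::'x \<Rightarrow> complex) \<xi>. \<gamma> \<xi> * \<omega> \<xi>)"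
  have T: "T \<in> \<mu> \<rightarrow>\<^sub>M \<mu>" "distr \<mu> \<mu> T = \<mu>"
    using haar_dual \<gamma>(1) unfolding haar_dual_def T_def by blast+
  have "(LINT \<omega>|\<mu>. \<omega> \<xi>) = (LINT \<omega>|distr \<mu> \<mu> T. \<omega> \<xi>)"
    using T(2) by simp
  also have "\<dots> = (LINT \<omega>|\<mu>. T \<omega> \<xi>)"
    by (rule integral_distr[OF T(1)]) simp
  also have "\<dots> = \<gamma> \<xi> * (LINT \<omega>|\<mu>. \<omega> \<xi>)"
    unfolding T_def by simp
  finally have "(1 - \<gamma> \<xi>) * (LINT \<omega>|\<mu>. \<omega> \<xi>) = 0"
    by (simp add: algebra_simps)
  then show ?thesis
    using \<gamma>(2) False by simp
qed

lemma L2_inner_eval_eval: "L2_inner \<mu> (\<lambda>\<omega>. \<omega> \<xi>) (\<lambda>\<omega>. \<omega> \<eta>) = (if \<xi> = \<eta> then 1 else 0)"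
proof -
  have "L2_inner \<mu> (\<lambda>\<omega>. \<omega> \<xi>) (\<lambda>\<omega>. \<omega> \<eta>) = (LINT \<omega>|\<mu>. \<omega> (\<xi> - \<eta>))"
    unfolding L2_inner_def by (rule Bochner_Integration.integral_cong) (auto simp: space_eq dual_group_diff)
  then show ?thesis
    by (simp add: integral_eval)
qed

lemma L2_inner_trig_poly_eval:
  "finite F \<Longrightarrow> L2_inner \<mu> (trig_poly F c) (\<lambda>\<omega>. \<omega> \<xi>) = (if \<xi> \<in> F then c \<xi> else 0)"
  unfolding trig_poly_def
  by (subst L2_inner_sum_left)
    (auto intro!: ess_bounded_cmult ess_bounded_eval
      simp: L2_inner_cmult_left L2_inner_eval_eval if_distrib cong: if_cong)

lemma L2_inner_trig_poly_right:
  assumes "finite F" "ess_bounded \<mu> f"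
  shows "L2_inner \<mu> f (trig_poly F c) = (\<Sum>\<xi>\<in>F. cnj (c \<xi>) * L2_inner \<mu> f (\<lambda>\<omega>. \<omega> \<xi>))"
  unfolding trig_poly_def using assms
  by (subst L2_inner_sum_right) (auto intro!: ess_bounded_cmult ess_bounded_eval simp: L2_inner_cmult_right)

lemma L2_sqnorm_trig_poly: "finite F \<Longrightarrow> L2_sqnorm \<mu> (trig_poly F c) = (\<Sum>\<xi>\<in>F. (cmod (c \<xi>))\<^sup>2)"
proof -
  assume F: "finite F"
  have "complex_of_real (L2_sqnorm \<mu> (trig_poly F c)) = (\<Sum>\<xi>\<in>F. cnj (c \<xi>) * c \<xi>)"
    unfolding L2_inner_self[symmetric] using F
    by (simp add: L2_inner_trig_poly_right ess_bounded_trig_poly L2_inner_trig_poly_eval)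
  also have "\<dots> = complex_of_real (\<Sum>\<xi>\<in>F. (cmod (c \<xi>))\<^sup>2)"
    by (simp only: cnj_mult_self of_real_sum)
  finally show ?thesis
    by (rule of_real_eq_iff[THEN iffD1])
qed

lemma bessel_inequality:
  assumes f: "ess_bounded \<mu> f" and F: "finite F"
  shows "(\<Sum>\<xi>\<in>F. (cmod (L2_inner \<mu> f (\<lambda>\<omega>. \<omega> \<xi>)))\<^sup>2) \<le> L2_sqnorm \<mu> f"
proof -
  define c where "c \<xi> = L2_inner \<mu> f (\<lambda>\<omega>. \<omega> \<xi>)" for \<xi>
  define p where "p = trig_poly F c"
  define S where "S = (\<Sum>\<xi>\<in>F. (cmod (c \<xi>))\<^sup>2)"
  have p: "ess_bounded \<mu> p"
    unfolding p_def using F by (rule ess_bounded_trig_poly)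
  have "L2_inner \<mu> f p = (\<Sum>\<xi>\<in>F. cnj (c \<xi>) * c \<xi>)"
    unfolding p_def using F f by (simp add: L2_inner_trig_poly_right c_def)
  then have fp: "L2_inner \<mu> f p = complex_of_real S"
    unfolding S_def by (simp only: cnj_mult_self of_real_sum)
  have pp: "L2_inner \<mu> p p = complex_of_real S"
    unfolding L2_inner_self p_def S_def L2_sqnorm_trig_poly[OF F] ..
  have pf: "L2_inner \<mu> p f = complex_of_real S"
    using fp L2_inner_cnj_commute[of \<mu> p f] by simp
  have "complex_of_real (L2_sqnorm \<mu> (\<lambda>\<omega>. f \<omega> - p \<omega>))
      = L2_inner \<mu> f f - L2_inner \<mu> f p - (L2_inner \<mu> p f - L2_inner \<mu> p p)"
    unfolding L2_inner_self[symmetric] using f p ess_bounded_diff[OF f p]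
    by (simp add: L2_inner_diff_left L2_inner_diff_right)
  also have "\<dots> = complex_of_real (L2_sqnorm \<mu> f - S)"
    using fp pp pf by (simp add: L2_inner_self)
  finally have "L2_sqnorm \<mu> (\<lambda>\<omega>. f \<omega> - p \<omega>) = L2_sqnorm \<mu> f - S"
    by (rule of_real_eq_iff[THEN iffD1])
  then show ?thesis
    using L2_sqnorm_nonneg[of \<mu> "\<lambda>\<omega>. f \<omega> - p \<omega>"] unfolding S_def c_def by simp
qed

definition fourier_coeff :: "(('x \<Rightarrow> complex) \<Rightarrow> complex) \<Rightarrow> 'x \<Rightarrow> complex" where
  "fourier_coeff f \<xi> = L2_inner \<mu> f (\<lambda>\<omega>. \<omega> \<xi>)"

lemma fourier_coeff_l2: "ess_bounded \<mu> f \<Longrightarrow> fourier_coeff f \<in> l2"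
  using l2_finite_sums_bounded(1)[of "fourier_coeff f" "L2_sqnorm \<mu> f"] bessel_inequality
  unfolding fourier_coeff_def by blast

lemma fourier_coeff_const: "fourier_coeff (\<lambda>_. c) \<xi> = (if \<xi> = 0 then c else 0)"
proof -
  have "fourier_coeff (\<lambda>_. c) \<xi> = c * cnj (LINT \<omega>|\<mu>. \<omega> \<xi>)"
    unfolding fourier_coeff_def L2_inner_def by simp
  then show ?thesis
    by (simp add: integral_eval)
qed

lemma fourier_coeff_cmult: "fourier_coeff (\<lambda>\<omega>. c * f \<omega>) \<xi> = c * fourier_coeff f \<xi>"
  unfolding fourier_coeff_def by (rule L2_inner_cmult_left)

lemma fourier_coeff_linear:
  assumes "ess_bounded \<mu> f" "ess_bounded \<mu> g"
  shows "fourier_coeff (\<lambda>\<omega>. a * f \<omega> + b * g \<omega>) = (\<lambda>\<xi>. a * fourier_coeff f \<xi> + b * fourier_coeff g \<xi>)"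
  unfolding fourier_coeff_def using assms
  by (simp add: L2_inner_add_left ess_bounded_cmult ess_bounded_eval L2_inner_cmult_left)

lemma fourier_coeff_mult_eval:
  "fourier_coeff (\<lambda>\<omega>. f \<omega> * \<omega> \<eta>) \<xi> = fourier_coeff f (\<xi> - \<eta>)"
  unfolding fourier_coeff_def L2_inner_def
  by (rule Bochner_Integration.integral_cong)
    (auto simp: space_eq dual_group_diff dual_group_mult_cnj mult.assoc)

lemma fourier_coeff_mult_trig_poly:
  assumes f: "ess_bounded \<mu> f" and F: "finite F"
  shows "fourier_coeff (\<lambda>\<omega>. f \<omega> * trig_poly F g \<omega>) \<xi> = (\<Sum>\<eta>\<in>F. fourier_coeff f (\<xi> - \<eta>) * g \<eta>)"
proof -
  have "(\<lambda>\<omega>. f \<omega> * trig_poly F g \<omega>) = (\<lambda>\<omega>. \<Sum>\<eta>\<in>F. g \<eta> * (f \<omega> * \<omega> \<eta>))"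
    unfolding trig_poly_def by (auto simp: sum_distrib_left algebra_simps)
  then have "fourier_coeff (\<lambda>\<omega>. f \<omega> * trig_poly F g \<omega>) \<xi>
      = (\<Sum>\<eta>\<in>F. fourier_coeff (\<lambda>\<omega>. g \<eta> * (f \<omega> * \<omega> \<eta>)) \<xi>)"
    unfolding fourier_coeff_def using F f
    by (simp only:) (intro L2_inner_sum_left ess_bounded_cmult ess_bounded_mult ess_bounded_eval)
  also have "\<dots> = (\<Sum>\<eta>\<in>F. fourier_coeff f (\<xi> - \<eta>) * g \<eta>)"
    by (intro sum.cong refl) (subst fourier_coeff_cmult, subst fourier_coeff_mult_eval, rule mult.commute)
  finally show ?thesis .
qed

definition toeplitz :: "(('x \<Rightarrow> complex) \<Rightarrow> complex) \<Rightarrow> ('x \<Rightarrow> complex) \<Rightarrow> 'x \<Rightarrow> complex" where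
  "toeplitz \<phi> g \<xi> = (if 0 \<le> \<xi> then conv (fourier_coeff \<phi>) g \<xi> else 0)"

lemma toeplitz_trig_poly:
  assumes \<phi>: "ess_bounded \<mu> \<phi>" and F: "finite F" and g: "\<And>\<eta>. \<eta> \<notin> F \<Longrightarrow> g \<eta> = 0"
  shows "toeplitz \<phi> g \<xi> = (if 0 \<le> \<xi> then fourier_coeff (\<lambda>\<omega>. \<phi> \<omega> * trig_poly F g \<omega>) \<xi> else 0)"
  by (simp add: toeplitz_def fourier_coeff_mult_trig_poly[OF \<phi> F] conv_finite_support[OF F g])

lemma toeplitz_trig_poly_norm_le:
  assumes \<phi>: "ess_bounded \<mu> \<phi>" and F: "finite F" and g: "\<And>\<eta>. \<eta> \<notin> F \<Longrightarrow> g \<eta> = 0"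
  shows "toeplitz \<phi> g \<in> l2" "(l2_norm (toeplitz \<phi> g))\<^sup>2 \<le> L2_sqnorm \<mu> (\<lambda>\<omega>. \<phi> \<omega> * trig_poly F g \<omega>)"
proof -
  have b: "ess_bounded \<mu> (\<lambda>\<omega>. \<phi> \<omega> * trig_poly F g \<omega>)"
    by (intro ess_bounded_mult \<phi> ess_bounded_trig_poly F)
  have "(\<Sum>\<xi>\<in>E. (cmod (toeplitz \<phi> g \<xi>))\<^sup>2) \<le> L2_sqnorm \<mu> (\<lambda>\<omega>. \<phi> \<omega> * trig_poly F g \<omega>)"
    if E: "finite E" for E
  proof -
    have "(\<Sum>\<xi>\<in>E. (cmod (toeplitz \<phi> g \<xi>))\<^sup>2)
        \<le> (\<Sum>\<xi>\<in>E. (cmod (fourier_coeff (\<lambda>\<omega>. \<phi> \<omega> * trig_poly F g \<omega>) \<xi>))\<^sup>2)"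
      by (intro sum_mono) (simp add: toeplitz_trig_poly[OF \<phi> F g])
    also have "\<dots> \<le> L2_sqnorm \<mu> (\<lambda>\<omega>. \<phi> \<omega> * trig_poly F g \<omega>)"
      unfolding fourier_coeff_def by (rule bessel_inequality[OF b E])
    finally show ?thesis .
  qed
  then show "toeplitz \<phi> g \<in> l2" "(l2_norm (toeplitz \<phi> g))\<^sup>2 \<le> L2_sqnorm \<mu> (\<lambda>\<omega>. \<phi> \<omega> * trig_poly F g \<omega>)"
    unfolding l2_norm_squared using l2_finite_sums_bounded by blast+
qed

lemma conv_fourier_coeff_finite_sums_le:
  assumes \<phi>: "ess_bounded \<mu> \<phi>" and B: "AE \<omega> in \<mu>. cmod (\<phi> \<omega>) \<le> B" and E: "finite E" and F: "finite F"
  shows "(\<Sum>\<xi>\<in>E. (cmod (\<Sum>\<eta>\<in>F. fourier_coeff \<phi> (\<xi> - \<eta>) * g \<eta>))\<^sup>2) \<le> B\<^sup>2 * (\<Sum>\<eta>\<in>F. (cmod (g \<eta>))\<^sup>2)"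
proof -
  have "(\<Sum>\<xi>\<in>E. (cmod (\<Sum>\<eta>\<in>F. fourier_coeff \<phi> (\<xi> - \<eta>) * g \<eta>))\<^sup>2)
      = (\<Sum>\<xi>\<in>E. (cmod (fourier_coeff (\<lambda>\<omega>. \<phi> \<omega> * trig_poly F g \<omega>) \<xi>))\<^sup>2)"
    by (simp only: fourier_coeff_mult_trig_poly[OF \<phi> F])
  also have "\<dots> \<le> L2_sqnorm \<mu> (\<lambda>\<omega>. \<phi> \<omega> * trig_poly F g \<omega>)"
    unfolding fourier_coeff_def
    by (rule bessel_inequality[OF ess_bounded_mult[OF \<phi> ess_bounded_trig_poly[OF F]] E])
  also have "\<dots> \<le> B\<^sup>2 * L2_sqnorm \<mu> (trig_poly F g)"
    by (rule L2_sqnorm_mult_le[OF ess_bounded_trig_poly[OF F] \<phi> B])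
  finally show ?thesis
    by (simp add: L2_sqnorm_trig_poly[OF F])
qed

lemma toeplitz_bound:
  assumes \<phi>: "ess_bounded \<mu> \<phi>" and B: "AE \<omega> in \<mu>. cmod (\<phi> \<omega>) \<le> B" "0 \<le> B" and g: "g \<in> l2"
  shows "toeplitz \<phi> g \<in> l2_plus" "l2_norm (toeplitz \<phi> g) \<le> B * l2_norm g"
proof -
  have conv_sums: "(\<Sum>\<xi>\<in>E. (cmod (conv (fourier_coeff \<phi>) g \<xi>))\<^sup>2) \<le> B\<^sup>2 * (\<Sum>\<^sub>\<infinity>\<eta>. (cmod (g \<eta>))\<^sup>2)"
    if E: "finite E" for E
  proof (rule tendsto_le[OF finite_subsets_at_top_neq_bot])
    show "((\<lambda>F. \<Sum>\<xi>\<in>E. (cmod (\<Sum>\<eta>\<in>F. fourier_coeff \<phi> (\<xi> - \<eta>) * g \<eta>))\<^sup>2)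
        \<longlongrightarrow> (\<Sum>\<xi>\<in>E. (cmod (conv (fourier_coeff \<phi>) g \<xi>))\<^sup>2)) (finite_subsets_at_top UNIV)"
      by (intro tendsto_sum tendsto_power tendsto_norm conv_tendsto fourier_coeff_l2 \<phi> g)
    show "\<forall>\<^sub>F F in finite_subsets_at_top UNIV.
        (\<Sum>\<xi>\<in>E. (cmod (\<Sum>\<eta>\<in>F. fourier_coeff \<phi> (\<xi> - \<eta>) * g \<eta>))\<^sup>2) \<le> B\<^sup>2 * (\<Sum>\<^sub>\<infinity>\<eta>. (cmod (g \<eta>))\<^sup>2)"
    proof (rule eventually_finite_subsets_at_top_weakI)
      fix F :: "'x set"
      assume "finite F" "F \<subseteq> UNIV"
      then show "(\<Sum>\<xi>\<in>E. (cmod (\<Sum>\<eta>\<in>F. fourier_coeff \<phi> (\<xi> - \<eta>) * g \<eta>))\<^sup>2) \<le> B\<^sup>2 * (\<Sum>\<^sub>\<infinity>\<eta>. (cmod (g \<eta>))\<^sup>2)"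
        using conv_fourier_coeff_finite_sums_le[OF \<phi> B(1) E, of F g] l2_finite_sum_le[OF g, of F]
        by (meson mult_left_mono order_trans zero_le_power2)
    qed
  qed simp
  have sums: "(\<Sum>\<xi>\<in>E. (cmod (toeplitz \<phi> g \<xi>))\<^sup>2) \<le> (B * l2_norm g)\<^sup>2" if E: "finite E" for E
  proof -
    have "(\<Sum>\<xi>\<in>E. (cmod (toeplitz \<phi> g \<xi>))\<^sup>2) \<le> (\<Sum>\<xi>\<in>E. (cmod (conv (fourier_coeff \<phi>) g \<xi>))\<^sup>2)"
      by (intro sum_mono) (simp add: toeplitz_def)
    also have "\<dots> \<le> B\<^sup>2 * (\<Sum>\<^sub>\<infinity>\<eta>. (cmod (g \<eta>))\<^sup>2)"
      by (rule conv_sums[OF E])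
    also have "\<dots> = (B * l2_norm g)\<^sup>2"
      by (simp add: power_mult_distrib l2_norm_squared)
    finally show ?thesis .
  qed
  show "l2_norm (toeplitz \<phi> g) \<le> B * l2_norm g"
    using sums B(2) by (intro l2_norm_le) (auto simp: l2_norm_nonneg)
  show "toeplitz \<phi> g \<in> l2_plus"
    unfolding l2_plus_iff using l2_finite_sums_bounded(1)[OF sums] by (simp add: toeplitz_def[abs_def])
qed

lemma toeplitz_linear:
  assumes "ess_bounded \<mu> \<phi>" "f \<in> l2" "g \<in> l2"
  shows "toeplitz \<phi> (\<lambda>\<xi>. a * f \<xi> + b * g \<xi>) = (\<lambda>\<xi>. a * toeplitz \<phi> f \<xi> + b * toeplitz \<phi> g \<xi>)"
proof
  fix \<xi>
  show "toeplitz \<phi> (\<lambda>\<xi>. a * f \<xi> + b * g \<xi>) \<xi> = a * toeplitz \<phi> f \<xi> + b * toeplitz \<phi> g \<xi>"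
    unfolding toeplitz_def using conv_linear_right[OF fourier_coeff_l2[OF assms(1)] assms(2,3)] by simp
qed

lemma toeplitz_linear_symbol:
  assumes "ess_bounded \<mu> \<phi>" "ess_bounded \<mu> \<psi>" "g \<in> l2"
  shows "toeplitz (\<lambda>\<omega>. a * \<phi> \<omega> + b * \<psi> \<omega>) g = (\<lambda>\<xi>. a * toeplitz \<phi> g \<xi> + b * toeplitz \<psi> g \<xi>)"
proof
  fix \<xi>
  show "toeplitz (\<lambda>\<omega>. a * \<phi> \<omega> + b * \<psi> \<omega>) g \<xi> = a * toeplitz \<phi> g \<xi> + b * toeplitz \<psi> g \<xi>"
    unfolding toeplitz_def fourier_coeff_linear[OF assms(1,2)]
    using conv_linear_left[OF fourier_coeff_l2[OF assms(1)] fourier_coeff_l2[OF assms(2)] assms(3)] by simp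
qed

lemma toeplitz_const: "g \<in> l2_plus \<Longrightarrow> toeplitz (\<lambda>_. c) g = (\<lambda>\<xi>. c * g \<xi>)"
  unfolding toeplitz_def l2_plus_iff by (auto simp: fourier_coeff_const[abs_def] conv_delta)

end

section \<open>Bounded inverses on \<open>l\<^sub>2(X\<^sub>+)\<close> and the Neumann series\<close>

definition l2_plus_inverse ::
    "(('x::linordered_ab_group_add \<Rightarrow> complex) \<Rightarrow> ('x \<Rightarrow> complex)) \<Rightarrow> (('x \<Rightarrow> complex) \<Rightarrow> ('x \<Rightarrow> complex)) \<Rightarrow> bool"
  where
  "l2_plus_inverse A S \<longleftrightarrow> (\<forall>g\<in>l2_plus. S g \<in> l2_plus) \<and>
     (\<forall>f\<in>l2_plus. \<forall>g\<in>l2_plus. \<forall>a b. S (\<lambda>\<xi>. a * f \<xi> + b * g \<xi>) = (\<lambda>\<xi>. a * S f \<xi> + b * S g \<xi>)) \<and>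
     (\<exists>C. \<forall>g\<in>l2_plus. l2_norm (S g) \<le> C * l2_norm g) \<and>
     (\<forall>g\<in>l2_plus. S (A g) = g) \<and> (\<forall>g\<in>l2_plus. A (S g) = g)"

lemma spectrum_l2_plus_iff:
  "z \<in> spectrum_l2_plus T \<longleftrightarrow> \<not> (\<exists>S. l2_plus_inverse (\<lambda>g \<xi>. T g \<xi> - z * g \<xi>) S)"
  unfolding spectrum_l2_plus_def l2_plus_inverse_def by simp

lemma l2_plus_inverse_cong:
  assumes "l2_plus_inverse A S" "\<And>g. g \<in> l2_plus \<Longrightarrow> A' g = A g"
  shows "l2_plus_inverse A' S"
  using assms unfolding l2_plus_inverse_def by simp

lemma l2_plus_inverse_scale:
  assumes S: "l2_plus_inverse (\<lambda>g \<xi>. s * A g \<xi>) S" and "s \<noteq> 0"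
  shows "l2_plus_inverse A (\<lambda>g. S (\<lambda>\<xi>. s * g \<xi>))"
proof -
  have S_l2_plus: "S g \<in> l2_plus" if "g \<in> l2_plus" for g
    using S that unfolding l2_plus_inverse_def by blast
  have S_linear: "S (\<lambda>\<xi>. a * f \<xi> + b * g \<xi>) = (\<lambda>\<xi>. a * S f \<xi> + b * S g \<xi>)"
    if "f \<in> l2_plus" "g \<in> l2_plus" for f g a b
    using S that unfolding l2_plus_inverse_def by blast
  obtain C where C: "\<And>g. g \<in> l2_plus \<Longrightarrow> l2_norm (S g) \<le> C * l2_norm g"
    using S unfolding l2_plus_inverse_def by blast
  have left: "S (\<lambda>\<xi>. s * A g \<xi>) = g" and right: "(\<lambda>\<xi>. s * A (S g) \<xi>) = g" if "g \<in> l2_plus" for g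
    using S that unfolding l2_plus_inverse_def by blast+
  show ?thesis
    unfolding l2_plus_inverse_def
  proof (intro conjI ballI allI)
    fix g :: "'a \<Rightarrow> complex"
    assume g: "g \<in> l2_plus"
    show "S (\<lambda>\<xi>. s * g \<xi>) \<in> l2_plus"
      by (rule S_l2_plus[OF l2_plus_cmult[OF g]])
    show "S (\<lambda>\<xi>. s * A g \<xi>) = g"
      by (rule left[OF g])
    have scaled: "(\<lambda>\<xi>. s * A (S (\<lambda>\<xi>. s * g \<xi>)) \<xi>) = (\<lambda>\<xi>. s * g \<xi>)"
      by (rule right[OF l2_plus_cmult[OF g]])
    show "A (S (\<lambda>\<xi>. s * g \<xi>)) = g"
    proof
      fix \<xi>
      have "s * A (S (\<lambda>\<xi>. s * g \<xi>)) \<xi> = s * g \<xi>"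
        using fun_cong[OF scaled, of \<xi>] by simp
      then show "A (S (\<lambda>\<xi>. s * g \<xi>)) \<xi> = g \<xi>"
        using \<open>s \<noteq> 0\<close> by simp
    qed
  next
    fix f g :: "'a \<Rightarrow> complex" and a b :: complex
    assume "f \<in> l2_plus" "g \<in> l2_plus"
    then have "S (\<lambda>\<xi>. a * (s * f \<xi>) + b * (s * g \<xi>)) = (\<lambda>\<xi>. a * S (\<lambda>\<xi>. s * f \<xi>) \<xi> + b * S (\<lambda>\<xi>. s * g \<xi>) \<xi>)"
      by (intro S_linear l2_plus_cmult)
    then show "S (\<lambda>\<xi>. s * (a * f \<xi> + b * g \<xi>)) = (\<lambda>\<xi>. a * S (\<lambda>\<xi>. s * f \<xi>) \<xi> + b * S (\<lambda>\<xi>. s * g \<xi>) \<xi>)"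
      by (simp add: algebra_simps)
  next
    have "l2_norm (S (\<lambda>\<xi>. s * g \<xi>)) \<le> C * cmod s * l2_norm g" if "g \<in> l2_plus" for g
      using C[OF l2_plus_cmult[OF that]] l2_norm_cmult[OF l2_plus_imp_l2[OF that]] by (simp add: mult.assoc)
    then show "\<exists>C. \<forall>g\<in>l2_plus. l2_norm (S (\<lambda>\<xi>. s * g \<xi>)) \<le> C * l2_norm g"
      by blast
  qed
qed

locale l2_plus_contraction =
  fixes B :: "('x::linordered_ab_group_add \<Rightarrow> complex) \<Rightarrow> ('x \<Rightarrow> complex)" and r :: real
  assumes B_l2_plus: "g \<in> l2_plus \<Longrightarrow> B g \<in> l2_plus"
    and B_linear: "f \<in> l2_plus \<Longrightarrow> g \<in> l2_plus \<Longrightarrow>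
      B (\<lambda>\<xi>. a * f \<xi> + b * g \<xi>) = (\<lambda>\<xi>. a * B f \<xi> + b * B g \<xi>)"
    and B_norm: "g \<in> l2_plus \<Longrightarrow> l2_norm (B g) \<le> r * l2_norm g"
    and r_nonneg: "0 \<le> r" and r_less_1: "r < 1"
begin

lemma funpow_l2_plus: "g \<in> l2_plus \<Longrightarrow> (B ^^ n) g \<in> l2_plus"
  by (induction n) (auto simp: B_l2_plus)

lemma funpow_linear:
  "f \<in> l2_plus \<Longrightarrow> g \<in> l2_plus \<Longrightarrow>
    (B ^^ n) (\<lambda>\<xi>. a * f \<xi> + b * g \<xi>) = (\<lambda>\<xi>. a * (B ^^ n) f \<xi> + b * (B ^^ n) g \<xi>)"
  by (induction n) (auto simp: B_linear funpow_l2_plus)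

lemma funpow_norm: "g \<in> l2_plus \<Longrightarrow> l2_norm ((B ^^ n) g) \<le> r ^ n * l2_norm g"
proof (induction n)
  case (Suc n)
  have "l2_norm ((B ^^ Suc n) g) \<le> r * l2_norm ((B ^^ n) g)"
    using B_norm[OF funpow_l2_plus[OF Suc.prems]] by simp
  also have "\<dots> \<le> r * (r ^ n * l2_norm g)"
    using Suc r_nonneg by (intro mult_left_mono) auto
  finally show ?case
    by simp
qed simp

lemma norm_funpow_le: "g \<in> l2_plus \<Longrightarrow> cmod ((B ^^ n) g \<xi>) \<le> r ^ n * l2_norm g"
  using norm_le_l2_norm[OF l2_plus_imp_l2[OF funpow_l2_plus]] funpow_norm order_trans by blast

lemma summable_geometric_mult: "summable (\<lambda>n. r ^ n * c)"
  using r_nonneg r_less_1 by (intro summable_mult2 summable_geometric) simp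

lemma summable_funpow: "g \<in> l2_plus \<Longrightarrow> summable (\<lambda>n. (B ^^ n) g \<xi>)"
  by (rule summable_comparison_test'[OF summable_geometric_mult, of 0]) (rule norm_funpow_le)

definition neumann_partial :: "nat \<Rightarrow> ('x \<Rightarrow> complex) \<Rightarrow> ('x \<Rightarrow> complex)" where
  "neumann_partial N g = (\<lambda>\<xi>. \<Sum>n<N. (B ^^ n) g \<xi>)"

definition neumann_sum :: "('x \<Rightarrow> complex) \<Rightarrow> ('x \<Rightarrow> complex)" where
  "neumann_sum g = (\<lambda>\<xi>. \<Sum>n. (B ^^ n) g \<xi>)"

lemma neumann_partial_l2_plus: "g \<in> l2_plus \<Longrightarrow> neumann_partial N g \<in> l2_plus"
  unfolding neumann_partial_def by (intro l2_plus_sum funpow_l2_plus) auto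

lemma neumann_partial_tendsto: "g \<in> l2_plus \<Longrightarrow> (\<lambda>N. neumann_partial N g \<xi>) \<longlonglongrightarrow> neumann_sum g \<xi>"
  unfolding neumann_partial_def neumann_sum_def using summable_funpow summable_LIMSEQ by blast

lemma L2_set_neumann_partial_le:
  assumes "g \<in> l2_plus" "finite F"
  shows "L2_set (\<lambda>\<xi>. cmod (neumann_partial N g \<xi>)) F \<le> (\<Sum>n<N. r ^ n * l2_norm g)"
proof (induction N)
  case 0
  then show ?case by (simp add: neumann_partial_def L2_set_def)
next
  case (Suc N)
  have "L2_set (\<lambda>\<xi>. cmod (neumann_partial (Suc N) g \<xi>)) F
      \<le> L2_set (\<lambda>\<xi>. cmod (neumann_partial N g \<xi>) + cmod ((B ^^ N) g \<xi>)) F"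
    by (rule L2_set_mono) (auto simp: neumann_partial_def norm_triangle_ineq)
  also have "\<dots> \<le> L2_set (\<lambda>\<xi>. cmod (neumann_partial N g \<xi>)) F + L2_set (\<lambda>\<xi>. cmod ((B ^^ N) g \<xi>)) F"
    by (rule L2_set_triangle_ineq)
  also have "\<dots> \<le> (\<Sum>n<N. r ^ n * l2_norm g) + r ^ N * l2_norm g"
    using Suc.IH L2_set_le_l2_norm[OF l2_plus_imp_l2[OF funpow_l2_plus[OF assms(1)]] assms(2), of N]
      funpow_norm[OF assms(1), of N] by linarith
  finally show ?case
    by simp
qed

lemma neumann_sum_bound:
  assumes g: "g \<in> l2_plus"
  shows "neumann_sum g \<in> l2_plus" "l2_norm (neumann_sum g) \<le> l2_norm g / (1 - r)"
proof -
  have bound: "L2_set (\<lambda>\<xi>. cmod (neumann_sum g \<xi>)) F \<le> l2_norm g / (1 - r)" if F: "finite F" for F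
  proof (rule LIMSEQ_le_const2)
    show "(\<lambda>N. L2_set (\<lambda>\<xi>. cmod (neumann_partial N g \<xi>)) F) \<longlonglongrightarrow> L2_set (\<lambda>\<xi>. cmod (neumann_sum g \<xi>)) F"
      unfolding L2_set_def by (intro tendsto_intros neumann_partial_tendsto g)
    have "(\<Sum>n<N. r ^ n * l2_norm g) \<le> (\<Sum>n. r ^ n * l2_norm g)" for N
      using l2_norm_nonneg[of g] r_nonneg by (intro sum_le_suminf summable_geometric_mult) auto
    also have "(\<Sum>n. r ^ n * l2_norm g) = l2_norm g / (1 - r)"
      using r_nonneg r_less_1 by (simp add: suminf_mult2[symmetric] suminf_geometric)
    finally show "\<exists>N. \<forall>n\<ge>N. L2_set (\<lambda>\<xi>. cmod (neumann_partial n g \<xi>)) F \<le> l2_norm g / (1 - r)"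
      using L2_set_neumann_partial_le[OF g F] order_trans by blast
  qed
  have "0 \<le> l2_norm g / (1 - r)"
    using l2_norm_nonneg[of g] r_less_1 by simp
  then have "neumann_sum g \<in> l2" "l2_norm (neumann_sum g) \<le> l2_norm g / (1 - r)"
    using l2_L2_set_bounded[OF bound] by auto
  moreover have "\<not> 0 \<le> \<xi> \<Longrightarrow> neumann_sum g \<xi> = 0" for \<xi>
    using funpow_l2_plus[OF g] unfolding neumann_sum_def l2_plus_iff by simp
  ultimately show "neumann_sum g \<in> l2_plus" "l2_norm (neumann_sum g) \<le> l2_norm g / (1 - r)"
    unfolding l2_plus_iff by blast+
qed

lemma neumann_sum_linear:
  assumes f: "f \<in> l2_plus" and g: "g \<in> l2_plus"
  shows "neumann_sum (\<lambda>\<xi>. a * f \<xi> + b * g \<xi>) = (\<lambda>\<xi>. a * neumann_sum f \<xi> + b * neumann_sum g \<xi>)"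
  unfolding neumann_sum_def funpow_linear[OF f g]
proof
  fix \<xi>
  show "(\<Sum>n. a * (B ^^ n) f \<xi> + b * (B ^^ n) g \<xi>) = a * (\<Sum>n. (B ^^ n) f \<xi>) + b * (\<Sum>n. (B ^^ n) g \<xi>)"
    using summable_funpow[OF f, of \<xi>] summable_funpow[OF g, of \<xi>]
    by (simp add: suminf_add[symmetric] suminf_mult summable_mult)
qed

lemma neumann_sum_left_inverse:
  assumes g: "g \<in> l2_plus"
  shows "neumann_sum (\<lambda>\<xi>. g \<xi> - B g \<xi>) = g"
proof
  fix \<xi>
  have "(B ^^ n) (\<lambda>\<xi>. 1 * g \<xi> + (- 1) * B g \<xi>) \<xi> = (B ^^ n) g \<xi> - (B ^^ Suc n) g \<xi>" for n
    unfolding funpow_linear[OF g B_l2_plus[OF g]] funpow_Suc_right by simp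
  moreover have "(\<lambda>n. (B ^^ n) g \<xi>) \<longlonglongrightarrow> 0"
  proof (rule Lim_null_comparison)
    show "\<forall>\<^sub>F n in sequentially. norm ((B ^^ n) g \<xi>) \<le> r ^ n * l2_norm g"
      using norm_funpow_le[OF g] by simp
    show "(\<lambda>n. r ^ n * l2_norm g) \<longlonglongrightarrow> 0"
      using r_nonneg r_less_1 by (intro tendsto_mult_left_zero LIMSEQ_power_zero) auto
  qed
  then have "(\<lambda>n. (B ^^ n) g \<xi> - (B ^^ Suc n) g \<xi>) sums ((B ^^ 0) g \<xi> - 0)"
    by (rule telescope_sums')
  ultimately show "neumann_sum (\<lambda>\<xi>. g \<xi> - B g \<xi>) \<xi> = g \<xi>"
    unfolding neumann_sum_def by (simp add: sums_iff)
qed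

lemma neumann_sum_tail: "g \<in> l2_plus \<Longrightarrow> (\<lambda>\<xi>. neumann_sum g \<xi> - neumann_partial N g \<xi>) = neumann_sum ((B ^^ N) g)"
proof
  fix \<xi>
  assume g: "g \<in> l2_plus"
  have "neumann_sum g \<xi> = (\<Sum>n. (B ^^ (n + N)) g \<xi>) + neumann_partial N g \<xi>"
    unfolding neumann_sum_def neumann_partial_def by (rule suminf_split_initial_segment[OF summable_funpow[OF g]])
  then show "neumann_sum g \<xi> - neumann_partial N g \<xi> = neumann_sum ((B ^^ N) g) \<xi>"
    unfolding neumann_sum_def by (simp add: funpow_add)
qed

lemma B_neumann_partial: "g \<in> l2_plus \<Longrightarrow> B (neumann_partial N g) = (\<lambda>\<xi>. neumann_partial (Suc N) g \<xi> - g \<xi>)"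
proof (induction N)
  case 0
  have "B (\<lambda>\<xi>. 0 * g \<xi> + 0 * g \<xi>) = (\<lambda>\<xi>. 0 * B g \<xi> + 0 * B g \<xi>)"
    by (rule B_linear[OF 0 0])
  then show ?case
    by (simp add: neumann_partial_def)
next
  case (Suc N)
  have partial: "neumann_partial (Suc N) g = (\<lambda>\<xi>. 1 * neumann_partial N g \<xi> + 1 * (B ^^ N) g \<xi>)"
    unfolding neumann_partial_def by simp
  show ?case
    unfolding partial B_linear[OF neumann_partial_l2_plus[OF Suc.prems] funpow_l2_plus[OF Suc.prems]]
      Suc.IH[OF Suc.prems]
    by (auto simp: neumann_partial_def)
qed

lemma neumann_sum_right_inverse:
  assumes g: "g \<in> l2_plus"
  shows "(\<lambda>\<xi>. neumann_sum g \<xi> - B (neumann_sum g) \<xi>) = g"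
proof
  fix \<xi>
  have Sg: "neumann_sum g \<in> l2_plus"
    using neumann_sum_bound(1)[OF g] .
  have lim1: "(\<lambda>N. B (neumann_partial N g) \<xi>) \<longlonglongrightarrow> neumann_sum g \<xi> - g \<xi>"
    unfolding B_neumann_partial[OF g]
    by (intro tendsto_diff tendsto_const LIMSEQ_Suc[OF neumann_partial_tendsto[OF g]])
  have lim2: "(\<lambda>N. B (neumann_partial N g) \<xi>) \<longlonglongrightarrow> B (neumann_sum g) \<xi>"
  proof (rule LIM_zero_cancel, rule Lim_null_comparison)
    have "cmod (B (neumann_partial N g) \<xi> - B (neumann_sum g) \<xi>) \<le> r * (r ^ N * l2_norm g / (1 - r))" for N
    proof -
      define t where "t = neumann_sum ((B ^^ N) g)"
      have t: "t \<in> l2_plus"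
        unfolding t_def by (rule neumann_sum_bound(1)[OF funpow_l2_plus[OF g]])
      have "l2_norm t \<le> l2_norm ((B ^^ N) g) / (1 - r)"
        unfolding t_def by (rule neumann_sum_bound(2)[OF funpow_l2_plus[OF g]])
      also have "\<dots> \<le> r ^ N * l2_norm g / (1 - r)"
        using funpow_norm[OF g, of N] r_less_1 by (simp add: divide_right_mono)
      finally have t_norm: "l2_norm t \<le> r ^ N * l2_norm g / (1 - r)" .
      have "B (neumann_partial N g) \<xi> - B (neumann_sum g) \<xi>
          = B (\<lambda>\<xi>. 1 * neumann_partial N g \<xi> + (- 1) * neumann_sum g \<xi>) \<xi>"
        using B_linear[OF neumann_partial_l2_plus[OF g] Sg, where a = 1 and b = "- 1"] by simp
      also have "(\<lambda>\<xi>. 1 * neumann_partial N g \<xi> + (- 1) * neumann_sum g \<xi>) = (\<lambda>\<xi>. (- 1) * t \<xi> + 0 * t \<xi>)"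
        unfolding t_def neumann_sum_tail[OF g, of N, symmetric] by simp
      also have "B (\<lambda>\<xi>. (- 1) * t \<xi> + 0 * t \<xi>) \<xi> = - B t \<xi>"
        unfolding B_linear[OF t t] by simp
      finally have "cmod (B (neumann_partial N g) \<xi> - B (neumann_sum g) \<xi>) = cmod (B t \<xi>)"
        by simp
      also have "\<dots> \<le> r * l2_norm t"
        using norm_le_l2_norm[OF l2_plus_imp_l2[OF B_l2_plus[OF t]]] B_norm[OF t] by (rule order_trans)
      also have "\<dots> \<le> r * (r ^ N * l2_norm g / (1 - r))"
        using t_norm r_nonneg by (rule mult_left_mono)
      finally show ?thesis .
    qed
    then show "\<forall>\<^sub>F N in sequentially. norm (B (neumann_partial N g) \<xi> - B (neumann_sum g) \<xi>)
        \<le> r * (r ^ N * l2_norm g / (1 - r))"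
      by simp
    show "(\<lambda>N. r * (r ^ N * l2_norm g / (1 - r))) \<longlonglongrightarrow> 0"
      using r_nonneg r_less_1
      by (intro tendsto_mult_right_zero tendsto_divide_zero tendsto_mult_left_zero LIMSEQ_power_zero) auto
  qed
  show "neumann_sum g \<xi> - B (neumann_sum g) \<xi> = g \<xi>"
    using LIMSEQ_unique[OF lim2 lim1] by simp
qed

lemma neumann_sum_inverse: "l2_plus_inverse (\<lambda>g \<xi>. g \<xi> - B g \<xi>) neumann_sum"
  unfolding l2_plus_inverse_def
proof (intro conjI ballI allI)
  show "\<exists>C. \<forall>g\<in>l2_plus. l2_norm (neumann_sum g) \<le> C * l2_norm g"
    using neumann_sum_bound(2) by (intro exI[of _ "1 / (1 - r)"]) simp
qed (auto simp: neumann_sum_bound(1) neumann_sum_linear neumann_sum_left_inverse neumann_sum_right_inverse)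

end

section \<open>Approximation by trigonometric polynomials\<close>

lemma trig_poly_add:
  assumes "finite F" "finite G"
  obtains H c where "finite H" "\<And>\<omega>. trig_poly F a \<omega> + trig_poly G b \<omega> = trig_poly H c \<omega>"
proof
  show "finite (F \<union> G)"
    using assms by simp
  fix \<omega>
  have "trig_poly F a \<omega> = (\<Sum>\<xi>\<in>F \<union> G. (if \<xi> \<in> F then a \<xi> else 0) * \<omega> \<xi>)"
    unfolding trig_poly_def using assms by (intro sum.mono_neutral_cong_left) auto
  moreover have "trig_poly G b \<omega> = (\<Sum>\<xi>\<in>F \<union> G. (if \<xi> \<in> G then b \<xi> else 0) * \<omega> \<xi>)"
    unfolding trig_poly_def using assms by (intro sum.mono_neutral_cong_left) auto
  ultimately show "trig_poly F a \<omega> + trig_poly G b \<omega>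
      = trig_poly (F \<union> G) (\<lambda>\<xi>. (if \<xi> \<in> F then a \<xi> else 0) + (if \<xi> \<in> G then b \<xi> else 0)) \<omega>"
    unfolding trig_poly_def by (simp add: sum.distrib distrib_right)
qed

lemma trig_poly_cmult: "c * trig_poly F a \<omega> = trig_poly F (\<lambda>\<xi>. c * a \<xi>) \<omega>"
  unfolding trig_poly_def by (simp add: sum_distrib_left mult.assoc)

lemma mult_divide_add_1_less:
  fixes x e :: real
  assumes "0 < e" "0 \<le> x"
  shows "x * (e / (x + 1)) < e"
  using assms by (simp add: field_simps)

context dual_haar
begin

lemma trig_poly_mult:
  assumes F: "finite F" and G: "finite G"
  obtains H c where "finite H" "\<And>\<omega>. \<omega> \<in> space \<mu> \<Longrightarrow> trig_poly F a \<omega> * trig_poly G b \<omega> = trig_poly H c \<omega>"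
proof
  define H where "H = (\<lambda>(\<xi>, \<eta>). \<xi> + \<eta>) ` (F \<times> G)"
  define c where "c \<zeta> = (\<Sum>p\<in>{p \<in> F \<times> G. (\<lambda>(\<xi>, \<eta>). \<xi> + \<eta>) p = \<zeta>}. a (fst p) * b (snd p))" for \<zeta>
  show "finite H"
    unfolding H_def using F G by simp
  fix \<omega>
  assume \<omega>: "\<omega> \<in> space \<mu>"
  have "trig_poly F a \<omega> * trig_poly G b \<omega> = (\<Sum>p\<in>F \<times> G. a (fst p) * b (snd p) * \<omega> ((\<lambda>(\<xi>, \<eta>). \<xi> + \<eta>) p))"
    unfolding trig_poly_def sum_product sum.cartesian_product using \<omega>
    by (intro sum.cong) (auto simp: space_eq dual_group_add)
  also have "\<dots> = (\<Sum>\<zeta>\<in>H. \<Sum>p\<in>{p \<in> F \<times> G. (\<lambda>(\<xi>, \<eta>). \<xi> + \<eta>) p = \<zeta>}.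
      a (fst p) * b (snd p) * \<omega> ((\<lambda>(\<xi>, \<eta>). \<xi> + \<eta>) p))"
    unfolding H_def using F G by (rule sum.image_gen[OF finite_cartesian_product])
  also have "\<dots> = trig_poly H c \<omega>"
    unfolding trig_poly_def c_def sum_distrib_right by (intro sum.cong refl) auto
  finally show "trig_poly F a \<omega> * trig_poly G b \<omega> = trig_poly H c \<omega>" .
qed

lemma trig_poly_cnj:
  "\<omega> \<in> space \<mu> \<Longrightarrow> cnj (trig_poly F a \<omega>) = trig_poly (uminus ` F) (\<lambda>\<zeta>. cnj (a (- \<zeta>))) \<omega>"
  unfolding trig_poly_def by (subst sum.reindex) (auto simp: inj_on_def space_eq dual_group_uminus)

lemma trig_poly_shift:
  "\<omega> \<in> space \<mu> \<Longrightarrow> trig_poly ((\<lambda>\<xi>. \<xi> + \<eta>) ` F) (\<lambda>\<zeta>. a (\<zeta> - \<eta>)) \<omega> = \<omega> \<eta> * trig_poly F a \<omega>"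
  unfolding trig_poly_def sum_distrib_left
  by (subst sum.reindex) (auto simp: inj_on_def space_eq dual_group_add intro!: sum.cong)

definition approximable :: "(('x \<Rightarrow> complex) \<Rightarrow> complex) \<Rightarrow> bool" where
  "approximable f \<longleftrightarrow> ess_bounded \<mu> f \<and>
     (\<forall>e>0. \<exists>F c. finite F \<and> L2_sqnorm \<mu> (\<lambda>\<omega>. f \<omega> - trig_poly F c \<omega>) < e)"

lemma approximable_ess_bounded: "approximable f \<Longrightarrow> ess_bounded \<mu> f"
  unfolding approximable_def by blast

lemma approximableE:
  assumes "approximable f" "0 < e"
  obtains F c where "finite F" "L2_sqnorm \<mu> (\<lambda>\<omega>. f \<omega> - trig_poly F c \<omega>) < e"
  using assms unfolding approximable_def by blast

lemma approximable_const: "approximable (\<lambda>_. c)"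
  unfolding approximable_def
proof (intro conjI allI impI ess_bounded_const)
  fix e :: real
  assume "0 < e"
  have "L2_sqnorm \<mu> (\<lambda>\<omega>. c - trig_poly {0} (\<lambda>_. c) \<omega>) = L2_sqnorm \<mu> (\<lambda>_. 0)"
    by (rule L2_sqnorm_cong) (auto simp: trig_poly_def space_eq dual_group_zero)
  then show "\<exists>F a. finite F \<and> L2_sqnorm \<mu> (\<lambda>\<omega>. c - trig_poly F a \<omega>) < e"
    using \<open>0 < e\<close> by (intro exI[of _ "{0}"] exI[of _ "\<lambda>_. c"]) (simp add: L2_sqnorm_def)
qed

lemma approximable_add:
  assumes f: "approximable f" and g: "approximable g"
  shows "approximable (\<lambda>\<omega>. f \<omega> + g \<omega>)"
  unfolding approximable_def
proof (intro conjI allI impI)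
  have bf: "ess_bounded \<mu> f" and bg: "ess_bounded \<mu> g"
    using f g by (auto intro: approximable_ess_bounded)
  show "ess_bounded \<mu> (\<lambda>\<omega>. f \<omega> + g \<omega>)"
    using bf bg by (rule ess_bounded_add)
  fix e :: real
  assume "0 < e"
  then obtain F1 a F2 b
    where F1: "finite F1" "L2_sqnorm \<mu> (\<lambda>\<omega>. f \<omega> - trig_poly F1 a \<omega>) < e / 4"
      and F2: "finite F2" "L2_sqnorm \<mu> (\<lambda>\<omega>. g \<omega> - trig_poly F2 b \<omega>) < e / 4"
    using f g by (metis approximableE zero_less_divide_iff zero_less_numeral)
  obtain H c where H: "finite H" "\<And>\<omega>. trig_poly F1 a \<omega> + trig_poly F2 b \<omega> = trig_poly H c \<omega>"
    using trig_poly_add[OF F1(1) F2(1)] by blast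
  have "L2_sqnorm \<mu> (\<lambda>\<omega>. f \<omega> + g \<omega> - trig_poly H c \<omega>)
      = L2_sqnorm \<mu> (\<lambda>\<omega>. (f \<omega> - trig_poly F1 a \<omega>) + (g \<omega> - trig_poly F2 b \<omega>))"
    by (rule L2_sqnorm_cong) (simp add: H(2)[symmetric] algebra_simps)
  also have "\<dots> \<le> 2 * L2_sqnorm \<mu> (\<lambda>\<omega>. f \<omega> - trig_poly F1 a \<omega>) + 2 * L2_sqnorm \<mu> (\<lambda>\<omega>. g \<omega> - trig_poly F2 b \<omega>)"
    using bf bg F1(1) F2(1) by (intro L2_sqnorm_add_le ess_bounded_diff ess_bounded_trig_poly)
  also have "\<dots> < e"
    using F1(2) F2(2) by simp
  finally show "\<exists>F c. finite F \<and> L2_sqnorm \<mu> (\<lambda>\<omega>. f \<omega> + g \<omega> - trig_poly F c \<omega>) < e"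
    using H(1) by blast
qed

lemma approximable_cmult:
  assumes f: "approximable f"
  shows "approximable (\<lambda>\<omega>. c * f \<omega>)"
  unfolding approximable_def
proof (intro conjI allI impI)
  show "ess_bounded \<mu> (\<lambda>\<omega>. c * f \<omega>)"
    using f by (intro ess_bounded_cmult approximable_ess_bounded)
  fix e :: real
  assume "0 < e"
  then have "0 < e / ((cmod c)\<^sup>2 + 1)"
    by (simp add: add_nonneg_pos)
  with f obtain F a where F: "finite F" "L2_sqnorm \<mu> (\<lambda>\<omega>. f \<omega> - trig_poly F a \<omega>) < e / ((cmod c)\<^sup>2 + 1)"
    by (rule approximableE)
  have "L2_sqnorm \<mu> (\<lambda>\<omega>. c * f \<omega> - trig_poly F (\<lambda>\<xi>. c * a \<xi>) \<omega>)
      = (cmod c)\<^sup>2 * L2_sqnorm \<mu> (\<lambda>\<omega>. f \<omega> - trig_poly F a \<omega>)"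
    unfolding trig_poly_cmult[symmetric] right_diff_distrib[symmetric] by (rule L2_sqnorm_cmult)
  also have "\<dots> \<le> (cmod c)\<^sup>2 * (e / ((cmod c)\<^sup>2 + 1))"
    using F(2) by (intro mult_left_mono) auto
  also have "\<dots> < e"
    using mult_divide_add_1_less[OF \<open>0 < e\<close>, of "(cmod c)\<^sup>2"] by simp
  finally show "\<exists>F a. finite F \<and> L2_sqnorm \<mu> (\<lambda>\<omega>. c * f \<omega> - trig_poly F a \<omega>) < e"
    using F(1) by blast
qed

lemma approximable_cnj:
  assumes f: "approximable f"
  shows "approximable (\<lambda>\<omega>. cnj (f \<omega>))"
  unfolding approximable_def
proof (intro conjI allI impI)
  show "ess_bounded \<mu> (\<lambda>\<omega>. cnj (f \<omega>))"
    using f by (intro ess_bounded_cnj approximable_ess_bounded)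
  fix e :: real
  assume "0 < e"
  with f obtain F a where F: "finite F" "L2_sqnorm \<mu> (\<lambda>\<omega>. f \<omega> - trig_poly F a \<omega>) < e"
    by (rule approximableE)
  have "L2_sqnorm \<mu> (\<lambda>\<omega>. cnj (f \<omega>) - trig_poly (uminus ` F) (\<lambda>\<zeta>. cnj (a (- \<zeta>))) \<omega>)
      = L2_sqnorm \<mu> (\<lambda>\<omega>. f \<omega> - trig_poly F a \<omega>)"
    by (rule L2_sqnorm_cong) (metis trig_poly_cnj complex_cnj_diff complex_mod_cnj)
  then show "\<exists>F a. finite F \<and> L2_sqnorm \<mu> (\<lambda>\<omega>. cnj (f \<omega>) - trig_poly F a \<omega>) < e"
    using F by (metis finite_imageI)
qed

text \<open>In \<open>f g - p q = f (g - q) + q (f - p)\<close> the approximant \<open>q\<close> is chosen first, since the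
  admissible error for \<open>p\<close> depends on the sup-norm of \<open>q\<close>.\<close>
lemma approximable_mult:
  assumes f: "approximable f" and g: "approximable g"
  shows "approximable (\<lambda>\<omega>. f \<omega> * g \<omega>)"
  unfolding approximable_def
proof (intro conjI allI impI)
  have bf: "ess_bounded \<mu> f" and bg: "ess_bounded \<mu> g"
    using f g by (auto intro: approximable_ess_bounded)
  show "ess_bounded \<mu> (\<lambda>\<omega>. f \<omega> * g \<omega>)"
    using bf bg by (rule ess_bounded_mult)
  fix e :: real
  assume e: "0 < e"
  obtain Mf where Mf: "0 \<le> Mf" "AE \<omega> in \<mu>. cmod (f \<omega>) \<le> Mf"
    using bf by (rule ess_boundedE)
  have "0 < e / (4 * Mf\<^sup>2 + 1)"
    using e by (simp add: add_nonneg_pos)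
  with g obtain G b where G: "finite G" "L2_sqnorm \<mu> (\<lambda>\<omega>. g \<omega> - trig_poly G b \<omega>) < e / (4 * Mf\<^sup>2 + 1)"
    by (rule approximableE)
  define Mq where "Mq = (\<Sum>\<xi>\<in>G. cmod (b \<xi>))"
  have Mq: "AE \<omega> in \<mu>. cmod (trig_poly G b \<omega>) \<le> Mq"
    unfolding Mq_def by (intro AE_I2 trig_poly_bound)
  have "0 < e / (4 * Mq\<^sup>2 + 1)"
    using e by (simp add: add_nonneg_pos)
  with f obtain F a where F: "finite F" "L2_sqnorm \<mu> (\<lambda>\<omega>. f \<omega> - trig_poly F a \<omega>) < e / (4 * Mq\<^sup>2 + 1)"
    by (rule approximableE)
  obtain H c where H: "finite H" "\<And>\<omega>. \<omega> \<in> space \<mu> \<Longrightarrow> trig_poly F a \<omega> * trig_poly G b \<omega> = trig_poly H c \<omega>"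
    using trig_poly_mult[OF F(1) G(1)] by blast
  have "L2_sqnorm \<mu> (\<lambda>\<omega>. f \<omega> * g \<omega> - trig_poly H c \<omega>)
      = L2_sqnorm \<mu> (\<lambda>\<omega>. f \<omega> * (g \<omega> - trig_poly G b \<omega>) + trig_poly G b \<omega> * (f \<omega> - trig_poly F a \<omega>))"
    using H(2) by (intro L2_sqnorm_cong) (simp add: algebra_simps)
  also have "\<dots> \<le> 2 * L2_sqnorm \<mu> (\<lambda>\<omega>. f \<omega> * (g \<omega> - trig_poly G b \<omega>))
      + 2 * L2_sqnorm \<mu> (\<lambda>\<omega>. trig_poly G b \<omega> * (f \<omega> - trig_poly F a \<omega>))"
    using bf bg F(1) G(1) by (intro L2_sqnorm_add_le ess_bounded_mult ess_bounded_diff ess_bounded_trig_poly)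
  also have "\<dots> \<le> 2 * (Mf\<^sup>2 * L2_sqnorm \<mu> (\<lambda>\<omega>. g \<omega> - trig_poly G b \<omega>))
      + 2 * (Mq\<^sup>2 * L2_sqnorm \<mu> (\<lambda>\<omega>. f \<omega> - trig_poly F a \<omega>))"
    using bf bg F(1) G(1) Mf Mq
    by (intro add_mono mult_left_mono L2_sqnorm_mult_le ess_bounded_diff ess_bounded_trig_poly) auto
  also have "\<dots> \<le> 2 * (Mf\<^sup>2 * (e / (4 * Mf\<^sup>2 + 1))) + 2 * (Mq\<^sup>2 * (e / (4 * Mq\<^sup>2 + 1)))"
    using F(2) G(2) by (intro add_mono mult_left_mono) auto
  also have "\<dots> < e"
  proof -
    have "2 * (Mf\<^sup>2 * (e / (4 * Mf\<^sup>2 + 1))) < e / 2" "2 * (Mq\<^sup>2 * (e / (4 * Mq\<^sup>2 + 1))) < e / 2"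
      using mult_divide_add_1_less[OF e, of "4 * Mf\<^sup>2"] mult_divide_add_1_less[OF e, of "4 * Mq\<^sup>2"]
      by simp_all
    then show ?thesis
      by simp
  qed
  finally show "\<exists>F c. finite F \<and> L2_sqnorm \<mu> (\<lambda>\<omega>. f \<omega> * g \<omega> - trig_poly F c \<omega>) < e"
    using H(1) by blast
qed

lemma approximable_power: "approximable f \<Longrightarrow> approximable (\<lambda>\<omega>. f \<omega> ^ n)"
  by (induction n) (auto intro: approximable_mult approximable_const)

end

section \<open>The essential range lies in the spectrum\<close>

lemma (in prob_space) integrable_peak:
  fixes \<phi> :: "'a \<Rightarrow> real"
  assumes "\<phi> \<in> borel_measurable M" "AE x in M. 0 \<le> \<phi> x \<and> \<phi> x \<le> 1"
  shows "integrable M (\<lambda>x. \<phi> x ^ m * (1 - \<phi> x) ^ N)"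
proof (rule integrable_const_bound[where B = 1])
  show "AE x in M. norm (\<phi> x ^ m * (1 - \<phi> x) ^ N) \<le> 1"
    using assms(2) by eventually_elim (simp add: abs_mult power_abs mult_le_one power_le_one)
  show "(\<lambda>x. \<phi> x ^ m * (1 - \<phi> x) ^ N) \<in> borel_measurable M"
    using assms(1) by measurable
qed

lemma (in prob_space) integral_peak_le:
  fixes \<phi> :: "'a \<Rightarrow> real"
  assumes meas: "\<phi> \<in> borel_measurable M" and range: "AE x in M. 0 \<le> \<phi> x \<and> \<phi> x \<le> 1"
    and \<delta>: "0 \<le> \<delta>" "\<delta> \<le> 1"
  shows "(LINT x|M. \<phi> x * (1 - \<phi> x) ^ N) \<le> \<delta> * (LINT x|M. (1 - \<phi> x) ^ N) + (1 - \<delta>) ^ N"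
proof -
  have "(LINT x|M. \<phi> x * (1 - \<phi> x) ^ N) \<le> (LINT x|M. \<delta> * (1 - \<phi> x) ^ N + (1 - \<delta>) ^ N)"
  proof (rule integral_mono_AE)
    show "integrable M (\<lambda>x. \<phi> x * (1 - \<phi> x) ^ N)" "integrable M (\<lambda>x. \<delta> * (1 - \<phi> x) ^ N + (1 - \<delta>) ^ N)"
      using integrable_peak[OF meas range, of 1 N] integrable_peak[OF meas range, of 0 N] by simp_all
    show "AE x in M. \<phi> x * (1 - \<phi> x) ^ N \<le> \<delta> * (1 - \<phi> x) ^ N + (1 - \<delta>) ^ N"
      using range
    proof eventually_elim
      case (elim x)
      show ?case
      proof (cases "\<phi> x < \<delta>")
        case True
        then have "\<phi> x * (1 - \<phi> x) ^ N \<le> \<delta> * (1 - \<phi> x) ^ N"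
          using elim by (intro mult_right_mono) auto
        moreover have "0 \<le> (1 - \<delta>) ^ N"
          using \<delta> by simp
        ultimately show ?thesis
          by linarith
      next
        case False
        then have "\<phi> x * (1 - \<phi> x) ^ N \<le> 1 * (1 - \<delta>) ^ N"
          using elim by (intro mult_mono power_mono) auto
        moreover have "0 \<le> \<delta> * (1 - \<phi> x) ^ N"
          using elim \<delta> by simp
        ultimately show ?thesis
          by linarith
      qed
    qed
  qed
  also have "\<dots> = \<delta> * (LINT x|M. (1 - \<phi> x) ^ N) + (1 - \<delta>) ^ N"
    using integrable_peak[OF meas range, of 0 N] by (simp add: prob_space)
  finally show ?thesis .
qed

lemma (in prob_space) integral_peak_ge:
  fixes \<phi> :: "'a \<Rightarrow> real"
  assumes meas: "\<phi> \<in> borel_measurable M" and range: "AE x in M. 0 \<le> \<phi> x \<and> \<phi> x \<le> 1"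
    and \<epsilon>: "\<epsilon> \<le> 1"
  shows "(1 - \<epsilon>) ^ N * prob {x \<in> space M. \<phi> x < \<epsilon>} \<le> (LINT x|M. (1 - \<phi> x) ^ N)"
proof -
  define E where "E = {x \<in> space M. \<phi> x < \<epsilon>}"
  have E: "E \<in> events"
    unfolding E_def using meas by measurable
  have "(LINT x|M. (1 - \<epsilon>) ^ N * indicator E x) \<le> (LINT x|M. (1 - \<phi> x) ^ N)"
  proof (rule integral_mono_AE)
    show "integrable M (\<lambda>x. (1 - \<epsilon>) ^ N * indicator E x)"
      using E by (intro integrable_mult_right integrable_real_indicator) (auto simp: emeasure_eq_measure)
    show "integrable M (\<lambda>x. (1 - \<phi> x) ^ N)"
      using integrable_peak[OF meas range, of 0 N] by simp
    show "AE x in M. (1 - \<epsilon>) ^ N * indicator E x \<le> (1 - \<phi> x) ^ N"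
      using range by eventually_elim (use \<epsilon> in \<open>auto simp: E_def indicator_def intro!: power_mono\<close>)
  qed
  then show ?thesis
    using E unfolding E_def by simp
qed

text \<open>The peak functions \<open>(1 - \<phi>)\<^sup>N\<close> concentrate on the set where \<open>\<phi>\<close> is small.\<close>
lemma (in prob_space) integral_peak_less:
  fixes \<phi> :: "'a \<Rightarrow> real"
  assumes meas: "\<phi> \<in> borel_measurable M" and range: "AE x in M. 0 \<le> \<phi> x \<and> \<phi> x \<le> 1"
    and small: "\<And>\<epsilon>. 0 < \<epsilon> \<Longrightarrow> 0 < prob {x \<in> space M. \<phi> x < \<epsilon>}" and c: "0 < c"
  shows "\<forall>\<^sub>F N in sequentially. (LINT x|M. \<phi> x * (1 - \<phi> x) ^ N) < c * (LINT x|M. (1 - \<phi> x) ^ N)"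
proof -
  define \<delta> where "\<delta> = min (c / 2) (1 / 2)"
  define \<epsilon> where "\<epsilon> = \<delta> / 2"
  define p where "p = prob {x \<in> space M. \<phi> x < \<epsilon>}"
  have \<delta>: "0 < \<delta>" "\<delta> \<le> c / 2" "\<delta> \<le> 1 / 2" and \<epsilon>: "0 < \<epsilon>" "\<epsilon> < \<delta>"
    using c unfolding \<epsilon>_def \<delta>_def by auto
  have p: "0 < p"
    unfolding p_def using small[OF \<epsilon>(1)] .
  define \<rho> where "\<rho> = (1 - \<delta>) / (1 - \<epsilon>)"
  have \<rho>: "0 \<le> \<rho>" "\<rho> < 1"
    unfolding \<rho>_def using \<delta> \<epsilon> by auto
  have "\<forall>\<^sub>F N in sequentially. \<rho> ^ N < \<delta> * p"
    using \<rho> \<delta> p by (intro order_tendstoD(2)[OF LIMSEQ_power_zero]) auto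
  then show ?thesis
  proof eventually_elim
    case (elim N)
    have lower: "(1 - \<epsilon>) ^ N * p \<le> (LINT x|M. (1 - \<phi> x) ^ N)"
      unfolding p_def using integral_peak_ge[OF meas range] \<epsilon> \<delta> by simp
    have "(1 - \<delta>) ^ N = \<rho> ^ N * (1 - \<epsilon>) ^ N"
      unfolding \<rho>_def using \<epsilon> \<delta> by (simp add: power_divide)
    also have "\<dots> < \<delta> * ((1 - \<epsilon>) ^ N * p)"
      using elim \<epsilon> \<delta> by simp
    also have "\<dots> \<le> \<delta> * (LINT x|M. (1 - \<phi> x) ^ N)"
      using lower \<delta> by (intro mult_left_mono) auto
    finally have "(LINT x|M. \<phi> x * (1 - \<phi> x) ^ N) < 2 * \<delta> * (LINT x|M. (1 - \<phi> x) ^ N)"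
      using integral_peak_le[OF meas range, of \<delta> N] \<delta> by simp
    also have "\<dots> \<le> c * (LINT x|M. (1 - \<phi> x) ^ N)"
      using lower p \<delta> \<epsilon> by (intro mult_right_mono) (auto intro: order_trans[rotated])
    finally show ?case .
  qed
qed

lemma (in prob_space) prob_norm_less_pos:
  assumes "0 \<in> ess_range M f" "0 < e"
  shows "0 < prob {x \<in> space M. cmod (f x) < e}"
  using assms unfolding ess_range_def by (simp add: emeasure_eq_measure)

context dual_haar
begin

lemma toeplitz_l2_plus: "toeplitz \<phi> g \<in> l2 \<Longrightarrow> toeplitz \<phi> g \<in> l2_plus"
  unfolding l2_plus_iff by (simp add: toeplitz_def)

lemma trig_poly_bound_by_toeplitz_inverse_nonneg:
  assumes \<phi>: "ess_bounded \<mu> \<phi>" and S: "l2_plus_inverse (toeplitz \<phi>) S"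
    and C: "\<And>g. g \<in> l2_plus \<Longrightarrow> l2_norm (S g) \<le> C * l2_norm g" "0 \<le> C"
    and F: "finite F" "\<And>\<xi>. \<xi> \<in> F \<Longrightarrow> 0 \<le> \<xi>"
  shows "L2_sqnorm \<mu> (trig_poly F c) \<le> C\<^sup>2 * L2_sqnorm \<mu> (\<lambda>\<omega>. \<phi> \<omega> * trig_poly F c \<omega>)"
proof -
  define g where "g \<xi> = (if \<xi> \<in> F then c \<xi> else 0)" for \<xi>
  have trig_g: "trig_poly F g = trig_poly F c"
    unfolding trig_poly_def g_def by (intro ext sum.cong) auto
  have "((\<lambda>\<xi>. (cmod (g \<xi>))\<^sup>2) has_sum (\<Sum>\<xi>\<in>F. (cmod (c \<xi>))\<^sup>2)) UNIV"
    using F(1) by (intro has_sum_finite_neutralI) (auto simp: g_def)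
  then have "g \<in> l2" and g_norm: "(l2_norm g)\<^sup>2 = L2_sqnorm \<mu> (trig_poly F c)"
    unfolding l2_def l2_norm_squared L2_sqnorm_trig_poly[OF F(1)] by (auto simp: summable_on_def infsumI)
  have g_plus: "g \<in> l2_plus"
    using \<open>g \<in> l2\<close> F(2) unfolding l2_plus_iff g_def by auto
  have T: "toeplitz \<phi> g \<in> l2" "(l2_norm (toeplitz \<phi> g))\<^sup>2 \<le> L2_sqnorm \<mu> (\<lambda>\<omega>. \<phi> \<omega> * trig_poly F c \<omega>)"
    using toeplitz_trig_poly_norm_le[OF \<phi> F(1), of g] unfolding trig_g by (auto simp: g_def)
  have "S (toeplitz \<phi> g) = g"
    using S g_plus unfolding l2_plus_inverse_def by blast
  then have "l2_norm g \<le> C * l2_norm (toeplitz \<phi> g)"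
    using C(1)[OF toeplitz_l2_plus[OF T(1)]] by simp
  then have "(l2_norm g)\<^sup>2 \<le> C\<^sup>2 * (l2_norm (toeplitz \<phi> g))\<^sup>2"
    using l2_norm_nonneg[of g] by (metis power_mono power_mult_distrib)
  also have "\<dots> \<le> C\<^sup>2 * L2_sqnorm \<mu> (\<lambda>\<omega>. \<phi> \<omega> * trig_poly F c \<omega>)"
    using T(2) by (rule mult_left_mono) simp
  finally show ?thesis
    unfolding g_norm .
qed

text \<open>Multiplying by the unimodular character \<open>\<omega> \<mapsto> \<omega> \<eta>\<close> shifts the frequencies of a
  trigonometric polynomial into \<open>X\<^sub>+\<close> without changing either side.\<close>
lemma trig_poly_bound_by_toeplitz_inverse:
  assumes \<phi>: "ess_bounded \<mu> \<phi>" and S: "l2_plus_inverse (toeplitz \<phi>) S"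
    and C: "\<And>g. g \<in> l2_plus \<Longrightarrow> l2_norm (S g) \<le> C * l2_norm g" "0 \<le> C" and F: "finite F"
  shows "L2_sqnorm \<mu> (trig_poly F c) \<le> C\<^sup>2 * L2_sqnorm \<mu> (\<lambda>\<omega>. \<phi> \<omega> * trig_poly F c \<omega>)"
proof -
  define \<eta> where "\<eta> = (if F = {} then 0 else - Min F)"
  have shifted_nonneg: "0 \<le> \<zeta>" if \<zeta>: "\<zeta> \<in> (\<lambda>\<xi>. \<xi> + \<eta>) ` F" for \<zeta>
  proof -
    obtain \<xi> where \<xi>: "\<xi> \<in> F" "\<zeta> = \<xi> + \<eta>"
      using \<zeta> by blast
    then have "\<eta> = - Min F"
      unfolding \<eta>_def by auto
    then show ?thesis
      using \<xi> Min_le[OF F \<xi>(1)] by simp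
  qed
  have shift: "cmod (trig_poly ((\<lambda>\<xi>. \<xi> + \<eta>) ` F) (\<lambda>\<zeta>. c (\<zeta> - \<eta>)) \<omega>) = cmod (trig_poly F c \<omega>)"
    if "\<omega> \<in> space \<mu>" for \<omega>
    using that by (simp add: trig_poly_shift norm_mult space_eq dual_group_norm)
  have "L2_sqnorm \<mu> (trig_poly ((\<lambda>\<xi>. \<xi> + \<eta>) ` F) (\<lambda>\<zeta>. c (\<zeta> - \<eta>)))
      \<le> C\<^sup>2 * L2_sqnorm \<mu> (\<lambda>\<omega>. \<phi> \<omega> * trig_poly ((\<lambda>\<xi>. \<xi> + \<eta>) ` F) (\<lambda>\<zeta>. c (\<zeta> - \<eta>)) \<omega>)"
    by (rule trig_poly_bound_by_toeplitz_inverse_nonneg[OF \<phi> S C finite_imageI[OF F] shifted_nonneg])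
  moreover have "L2_sqnorm \<mu> (trig_poly ((\<lambda>\<xi>. \<xi> + \<eta>) ` F) (\<lambda>\<zeta>. c (\<zeta> - \<eta>))) = L2_sqnorm \<mu> (trig_poly F c)"
    by (rule L2_sqnorm_cong) (rule shift)
  moreover have "L2_sqnorm \<mu> (\<lambda>\<omega>. \<phi> \<omega> * trig_poly ((\<lambda>\<xi>. \<xi> + \<eta>) ` F) (\<lambda>\<zeta>. c (\<zeta> - \<eta>)) \<omega>)
      = L2_sqnorm \<mu> (\<lambda>\<omega>. \<phi> \<omega> * trig_poly F c \<omega>)"
    by (rule L2_sqnorm_cong) (simp add: norm_mult shift)
  ultimately show ?thesis
    by simp
qed

lemma approximable_bound_from_trig_poly_bound:
  assumes trig: "\<And>F c. finite F \<Longrightarrow> L2_sqnorm \<mu> (trig_poly F c) \<le> K * L2_sqnorm \<mu> (\<lambda>\<omega>. \<phi> \<omega> * trig_poly F c \<omega>)"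
    and K: "0 \<le> K" and \<phi>: "ess_bounded \<mu> \<phi>" and f: "approximable f"
  shows "L2_sqnorm \<mu> f \<le> 4 * K * L2_sqnorm \<mu> (\<lambda>\<omega>. \<phi> \<omega> * f \<omega>)"
proof (rule field_le_epsilon)
  fix e :: real
  assume e: "0 < e"
  have bf: "ess_bounded \<mu> f"
    using f by (rule approximable_ess_bounded)
  obtain M where M: "0 \<le> M" "AE \<omega> in \<mu>. cmod (\<phi> \<omega>) \<le> M"
    using \<phi> by (rule ess_boundedE)
  define D where "D = 4 * K * M\<^sup>2 + 2"
  have D: "0 < D"
    unfolding D_def using K by (simp add: add_nonneg_pos)
  from f obtain F c where F: "finite F" and d: "L2_sqnorm \<mu> (\<lambda>\<omega>. f \<omega> - trig_poly F c \<omega>) < e / D"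
    using e D by (metis approximableE divide_pos_pos)
  define p where "p = trig_poly F c"
  define d where "d = L2_sqnorm \<mu> (\<lambda>\<omega>. f \<omega> - p \<omega>)"
  have bp: "ess_bounded \<mu> p"
    unfolding p_def using F by (rule ess_bounded_trig_poly)
  have 1: "L2_sqnorm \<mu> f \<le> 2 * L2_sqnorm \<mu> p + 2 * d"
    using L2_sqnorm_add_le[OF bp ess_bounded_diff[OF bf bp]] unfolding d_def by simp
  have 2: "L2_sqnorm \<mu> p \<le> K * L2_sqnorm \<mu> (\<lambda>\<omega>. \<phi> \<omega> * p \<omega>)"
    unfolding p_def by (rule trig[OF F])
  have 3: "L2_sqnorm \<mu> (\<lambda>\<omega>. \<phi> \<omega> * p \<omega>)
      \<le> 2 * L2_sqnorm \<mu> (\<lambda>\<omega>. \<phi> \<omega> * f \<omega>) + 2 * L2_sqnorm \<mu> (\<lambda>\<omega>. \<phi> \<omega> * (p \<omega> - f \<omega>))"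
    using L2_sqnorm_add_le[OF ess_bounded_mult[OF \<phi> bf] ess_bounded_mult[OF \<phi> ess_bounded_diff[OF bp bf]]]
    by (simp add: algebra_simps)
  have 4: "L2_sqnorm \<mu> (\<lambda>\<omega>. \<phi> \<omega> * (p \<omega> - f \<omega>)) \<le> M\<^sup>2 * d"
    unfolding d_def L2_sqnorm_diff_commute[of \<mu> f p]
    by (rule L2_sqnorm_mult_le[OF ess_bounded_diff[OF bp bf] \<phi> M(2)])
  have "K * L2_sqnorm \<mu> (\<lambda>\<omega>. \<phi> \<omega> * p \<omega>) \<le> K * (2 * L2_sqnorm \<mu> (\<lambda>\<omega>. \<phi> \<omega> * f \<omega>) + 2 * (M\<^sup>2 * d))"
    using 3 4 K by (intro mult_left_mono) auto
  then have "L2_sqnorm \<mu> f \<le> 4 * K * L2_sqnorm \<mu> (\<lambda>\<omega>. \<phi> \<omega> * f \<omega>) + D * d"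
    using 1 2 unfolding D_def by (simp add: algebra_simps)
  moreover have "D * d \<le> e"
    using d D unfolding d_def p_def by (simp add: field_simps)
  ultimately show "L2_sqnorm \<mu> f \<le> 4 * K * L2_sqnorm \<mu> (\<lambda>\<omega>. \<phi> \<omega> * f \<omega>) + e"
    by simp
qed

lemma toeplitz_inverse_lower_bound:
  assumes \<phi>: "ess_bounded \<mu> \<phi>" and S: "l2_plus_inverse (toeplitz \<phi>) S"
  obtains K where "0 < K" "\<And>f. approximable f \<Longrightarrow> L2_sqnorm \<mu> f \<le> K * L2_sqnorm \<mu> (\<lambda>\<omega>. \<phi> \<omega> * f \<omega>)"
proof -
  obtain C0 where C0: "\<And>g. g \<in> l2_plus \<Longrightarrow> l2_norm (S g) \<le> C0 * l2_norm g"
    using S unfolding l2_plus_inverse_def by blast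
  define C where "C = max C0 1"
  have C: "l2_norm (S g) \<le> C * l2_norm g" if "g \<in> l2_plus" for g
    using C0[OF that] l2_norm_nonneg[of g] unfolding C_def by (metis max.cobounded1 mult_right_mono order_trans)
  have "0 \<le> C"
    unfolding C_def by simp
  show ?thesis
  proof
    show "0 < 4 * C\<^sup>2"
      unfolding C_def by simp
    show "L2_sqnorm \<mu> f \<le> 4 * C\<^sup>2 * L2_sqnorm \<mu> (\<lambda>\<omega>. \<phi> \<omega> * f \<omega>)" if "approximable f" for f
      using approximable_bound_from_trig_poly_bound[OF trig_poly_bound_by_toeplitz_inverse[OF \<phi> S C \<open>0 \<le> C\<close>]
          _ \<phi> that] by simp
  qed
qed

lemma approximable_peak:
  assumes "approximable \<psi>"
  shows "approximable (\<lambda>\<omega>. complex_of_real ((1 - (cmod (\<psi> \<omega>))\<^sup>2 / M\<^sup>2) ^ N))"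
proof -
  have "approximable (\<lambda>\<omega>. (1 + complex_of_real (- 1 / M\<^sup>2) * (\<psi> \<omega> * cnj (\<psi> \<omega>))) ^ N)"
    using assms by (intro approximable_power approximable_add approximable_const approximable_cmult
        approximable_mult approximable_cnj)
  moreover have "(\<lambda>\<omega>. (1 + complex_of_real (- 1 / M\<^sup>2) * (\<psi> \<omega> * cnj (\<psi> \<omega>))) ^ N)
      = (\<lambda>\<omega>. complex_of_real ((1 - (cmod (\<psi> \<omega>))\<^sup>2 / M\<^sup>2) ^ N))"
    unfolding complex_norm_square[symmetric] by (simp add: diff_divide_distrib)
  ultimately show ?thesis
    by simp
qed

lemma approximable_not_bounded_below:
  assumes \<psi>: "approximable \<psi>" and zero: "0 \<in> ess_range \<mu> \<psi>" and K: "0 < K"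
  obtains f where "approximable f" "K * L2_sqnorm \<mu> (\<lambda>\<omega>. \<psi> \<omega> * f \<omega>) < L2_sqnorm \<mu> f"
proof -
  have b\<psi>: "ess_bounded \<mu> \<psi>"
    using \<psi> by (rule approximable_ess_bounded)
  obtain B where B: "0 \<le> B" "AE \<omega> in \<mu>. cmod (\<psi> \<omega>) \<le> B"
    using b\<psi> by (rule ess_boundedE)
  define M where "M = B + 1"
  have M: "0 < M" "B \<le> M"
    unfolding M_def using B(1) by auto
  define \<phi> where "\<phi> \<omega> = (cmod (\<psi> \<omega>))\<^sup>2 / M\<^sup>2" for \<omega>
  have \<phi>_meas: "\<phi> \<in> borel_measurable \<mu>"
    unfolding \<phi>_def using ess_bounded_measurable[OF b\<psi>] by measurable
  have \<phi>_range: "AE \<omega> in \<mu>. 0 \<le> \<phi> \<omega> \<and> \<phi> \<omega> \<le> 1"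
    using B(2) by eventually_elim (use M in \<open>auto simp: \<phi>_def intro!: power_mono\<close>)
  have \<phi>_small: "0 < prob {\<omega> \<in> space \<mu>. \<phi> \<omega> < \<epsilon>}" if "0 < \<epsilon>" for \<epsilon>
  proof -
    have "{\<omega> \<in> space \<mu>. cmod (\<psi> \<omega>) < M * sqrt \<epsilon>} \<subseteq> {\<omega> \<in> space \<mu>. \<phi> \<omega> < \<epsilon>}"
    proof safe
      fix \<omega>
      assume "cmod (\<psi> \<omega>) < M * sqrt \<epsilon>"
      then have "(cmod (\<psi> \<omega>))\<^sup>2 < (M * sqrt \<epsilon>)\<^sup>2"
        by (intro power_strict_mono) auto
      then show "\<phi> \<omega> < \<epsilon>"
        unfolding \<phi>_def using M(1) that by (simp add: power_mult_distrib field_simps)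
    qed
    then have "prob {\<omega> \<in> space \<mu>. cmod (\<psi> \<omega>) < M * sqrt \<epsilon>} \<le> prob {\<omega> \<in> space \<mu>. \<phi> \<omega> < \<epsilon>}"
      using \<phi>_meas by (intro finite_measure_mono) measurable
    then show ?thesis
      using prob_norm_less_pos[OF zero, of "M * sqrt \<epsilon>"] M(1) that by simp
  qed
  have "\<forall>\<^sub>F N in sequentially.
      (LINT \<omega>|\<mu>. \<phi> \<omega> * (1 - \<phi> \<omega>) ^ N) < 1 / (K * M\<^sup>2) * (LINT \<omega>|\<mu>. (1 - \<phi> \<omega>) ^ N)"
    using K M by (intro integral_peak_less[OF \<phi>_meas \<phi>_range \<phi>_small]) auto
  then obtain N where N: "\<And>n. N \<le> n \<Longrightarrow>
      (LINT \<omega>|\<mu>. \<phi> \<omega> * (1 - \<phi> \<omega>) ^ n) < 1 / (K * M\<^sup>2) * (LINT \<omega>|\<mu>. (1 - \<phi> \<omega>) ^ n)"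
    unfolding eventually_sequentially by blast
  define q where "q \<omega> = complex_of_real ((1 - \<phi> \<omega>) ^ N)" for \<omega>
  have "approximable q"
    unfolding q_def \<phi>_def by (rule approximable_peak[OF \<psi>])
  moreover have "L2_sqnorm \<mu> q = (LINT \<omega>|\<mu>. (1 - \<phi> \<omega>) ^ (2 * N))"
    unfolding L2_sqnorm_def q_def norm_of_real by (simp add: power2_abs power_mult[symmetric] mult.commute)
  moreover have "L2_sqnorm \<mu> (\<lambda>\<omega>. \<psi> \<omega> * q \<omega>) = M\<^sup>2 * (LINT \<omega>|\<mu>. \<phi> \<omega> * (1 - \<phi> \<omega>) ^ (2 * N))"
    unfolding L2_sqnorm_def q_def norm_mult norm_of_real \<phi>_def[symmetric] using M(1)
    by (simp add: power_mult_distrib power2_abs power_mult[symmetric] \<phi>_def mult.commute)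
  moreover have "K * (M\<^sup>2 * (LINT \<omega>|\<mu>. \<phi> \<omega> * (1 - \<phi> \<omega>) ^ (2 * N))) < (LINT \<omega>|\<mu>. (1 - \<phi> \<omega>) ^ (2 * N))"
    using N[of "2 * N"] K M(1) by (simp add: field_simps)
  ultimately show ?thesis
    using that by simp
qed

lemma toeplitz_minus_const:
  assumes "ess_bounded \<mu> \<psi>" "g \<in> l2_plus"
  shows "toeplitz (\<lambda>\<omega>. \<psi> \<omega> - z) g = (\<lambda>\<xi>. toeplitz \<psi> g \<xi> - z * g \<xi>)"
  using toeplitz_linear_symbol[OF assms(1) ess_bounded_const l2_plus_imp_l2[OF assms(2)], of 1 "- z" 1]
    toeplitz_const[OF assms(2), of 1] by simp

theorem ess_range_subset_spectrum_toeplitz: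
  assumes \<psi>: "approximable \<psi>"
  shows "ess_range \<mu> \<psi> \<subseteq> spectrum_l2_plus (toeplitz \<psi>)"
proof
  fix z
  assume z: "z \<in> ess_range \<mu> \<psi>"
  have b\<psi>: "ess_bounded \<mu> (\<lambda>\<omega>. \<psi> \<omega> - z)"
    using \<psi> by (intro ess_bounded_diff ess_bounded_const approximable_ess_bounded)
  show "z \<in> spectrum_l2_plus (toeplitz \<psi>)"
    unfolding spectrum_l2_plus_iff
  proof
    assume "\<exists>S. l2_plus_inverse (\<lambda>g \<xi>. toeplitz \<psi> g \<xi> - z * g \<xi>) S"
    then obtain S where "l2_plus_inverse (toeplitz (\<lambda>\<omega>. \<psi> \<omega> - z)) S"
      using l2_plus_inverse_cong toeplitz_minus_const[OF approximable_ess_bounded[OF \<psi>]] by blast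
    then obtain K where K: "0 < K"
      "\<And>f. approximable f \<Longrightarrow> L2_sqnorm \<mu> f \<le> K * L2_sqnorm \<mu> (\<lambda>\<omega>. (\<psi> \<omega> - z) * f \<omega>)"
      using toeplitz_inverse_lower_bound[OF b\<psi>] by blast
    have "approximable (\<lambda>\<omega>. \<psi> \<omega> - z)"
      using approximable_add[OF \<psi> approximable_const[of "- z"]] by simp
    moreover have "0 \<in> ess_range \<mu> (\<lambda>\<omega>. \<psi> \<omega> - z)"
      using z unfolding ess_range_def by simp
    ultimately obtain f where "approximable f" "K * L2_sqnorm \<mu> (\<lambda>\<omega>. (\<psi> \<omega> - z) * f \<omega>) < L2_sqnorm \<mu> f"
      using approximable_not_bounded_below K(1) by blast
    then show False
      using K(2) by fastforce
  qed
qed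

end

section \<open>The spectrum lies in the closed convex hull of the essential range\<close>

lemma AE_in_closed_superset_ess_range:
  assumes f: "f \<in> borel_measurable M" and K: "closed K" "ess_range M f \<subseteq> K"
  shows "AE x in M. f x \<in> K"
proof -
  have "\<exists>e>0. emeasure M {x \<in> space M. cmod (f x - w) < e} = 0" if "w \<notin> K" for w
  proof -
    have "w \<notin> ess_range M f"
      using that K(2) by blast
    then show ?thesis
      unfolding ess_range_def by (auto simp: not_less)
  qed
  then obtain rad where rad: "\<And>w. w \<notin> K \<Longrightarrow> 0 < rad w"
    "\<And>w. w \<notin> K \<Longrightarrow> emeasure M {x \<in> space M. cmod (f x - w) < rad w} = 0"
    by metis
  define \<B> where "\<B> = (\<lambda>w. ball w (rad w)) ` (- K)"
  obtain \<B>' where \<B>': "\<B>' \<subseteq> \<B>" "countable \<B>'" "\<Union>\<B>' = \<Union>\<B>"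
    by (rule Lindelof[of \<B>]) (auto simp: \<B>_def)
  have "AE x in M. f x \<notin> U" if U: "U \<in> \<B>'" for U
  proof -
    obtain w where w: "w \<notin> K" "U = ball w (rad w)"
      using U \<B>'(1) unfolding \<B>_def by auto
    have "{x \<in> space M. cmod (f x - w) < rad w} \<in> null_sets M"
      using rad(2)[OF w(1)] f by (auto simp: null_sets_def)
    then show ?thesis
      by (rule AE_I') (auto simp: w(2) dist_norm norm_minus_commute)
  qed
  then have "AE x in M. \<forall>U\<in>\<B>'. f x \<notin> U"
    using \<B>'(2) by (simp add: AE_ball_countable)
  then show ?thesis
  proof eventually_elim
    case (elim x)
    show "f x \<in> K"
    proof (rule ccontr)
      assume "f x \<notin> K"
      then have "f x \<in> \<Union>\<B>"
        using rad(1) unfolding \<B>_def by force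
      then show False
        using elim \<B>'(3) by auto
    qed
  qed
qed

lemma cmod_one_minus_squared: "(cmod (1 - u))\<^sup>2 = 1 - 2 * Re u + (cmod u)\<^sup>2"
  unfolding cmod_power2 by (simp add: power2_eq_square algebra_simps)

lemma cmod_one_minus_le_sqrt:
  assumes "c \<le> Re u" "(cmod u)\<^sup>2 \<le> c" "c < 1"
  shows "cmod (1 - u) \<le> sqrt (1 - c)"
proof (rule power2_le_imp_le)
  show "(cmod (1 - u))\<^sup>2 \<le> (sqrt (1 - c))\<^sup>2"
    using assms unfolding cmod_one_minus_squared by simp
qed (use assms in simp)

lemma half_plane_contraction:
  fixes a :: complex and \<delta> B :: real
  assumes "0 < \<delta>"
  obtains t r :: real where "0 < t" "0 \<le> r" "r < 1"
    "\<And>w. \<delta> < Re (cnj a * w) \<Longrightarrow> cmod w \<le> B \<Longrightarrow> cmod (1 - of_real t * cnj a * w) \<le> r"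
proof -
  define t where "t = \<delta> / ((cmod a)\<^sup>2 * B\<^sup>2 + \<delta>\<^sup>2 + 1)"
  have den: "0 < (cmod a)\<^sup>2 * B\<^sup>2 + \<delta>\<^sup>2 + 1"
    by (simp add: add_nonneg_pos)
  have t: "0 < t"
    unfolding t_def using assms den by simp
  have "t * ((cmod a)\<^sup>2 * B\<^sup>2) = \<delta> * ((cmod a)\<^sup>2 * B\<^sup>2 / ((cmod a)\<^sup>2 * B\<^sup>2 + \<delta>\<^sup>2 + 1))"
    unfolding t_def by simp
  also have "\<dots> \<le> \<delta>"
    using den assms mult_left_mono[of _ 1 \<delta>] by (simp add: divide_le_eq)
  finally have t_bound: "t * ((cmod a)\<^sup>2 * B\<^sup>2) \<le> \<delta>" .
  have "t * \<delta> = \<delta>\<^sup>2 / ((cmod a)\<^sup>2 * B\<^sup>2 + \<delta>\<^sup>2 + 1)"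
    unfolding t_def by (simp add: power2_eq_square)
  also have "\<dots> < 1"
    using den by (simp add: divide_less_eq add_nonneg_pos)
  finally have t_delta: "t * \<delta> < 1" .
  have "cmod (1 - of_real t * cnj a * w) \<le> sqrt (1 - t * \<delta>)"
    if re: "\<delta> < Re (cnj a * w)" and w: "cmod w \<le> B" for w
  proof (rule cmod_one_minus_le_sqrt[OF _ _ t_delta])
    show "t * \<delta> \<le> Re (of_real t * cnj a * w)"
      using re t by (simp add: mult.assoc)
    have "(cmod (of_real t * cnj a * w))\<^sup>2 = t * (t * ((cmod a)\<^sup>2 * (cmod w)\<^sup>2))"
      using t by (simp add: norm_mult power_mult_distrib power2_eq_square)
    also have "\<dots> \<le> t * (t * ((cmod a)\<^sup>2 * B\<^sup>2))"
      using w t by (intro mult_left_mono power_mono) auto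
    also have "\<dots> \<le> t * \<delta>"
      using t_bound t by (intro mult_left_mono) auto
    finally show "(cmod (of_real t * cnj a * w))\<^sup>2 \<le> t * \<delta>" .
  qed
  moreover have "0 \<le> sqrt (1 - t * \<delta>)" "sqrt (1 - t * \<delta>) < 1"
    using t_delta t assms by auto
  ultimately show ?thesis
    using that t by blast
qed

lemma (in prob_space) AE_separating_half_plane:
  fixes f :: "'a \<Rightarrow> complex"
  assumes f: "f \<in> borel_measurable M" and z: "z \<notin> closure (convex hull (ess_range M f))"
  obtains a \<delta> where "a \<noteq> 0" "0 < \<delta>" "AE x in M. \<delta> < Re (cnj a * (f x - z))"
proof -
  define K where "K = closure (convex hull (ess_range M f))"
  have K: "closed K" "convex K" "ess_range M f \<subseteq> K" "z \<notin> K"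
    unfolding K_def using z by (auto intro: convex_closure closure_subset[THEN subsetD] hull_subset[THEN subsetD])
  have ae_K: "AE x in M. f x \<in> K"
    using AE_in_closed_superset_ess_range[OF f K(1,3)] .
  obtain a b where ab: "inner a z < b" "\<And>x. x \<in> K \<Longrightarrow> b < inner a x"
    using separating_hyperplane_closed_point[OF K(2,1,4)] by blast
  have inner_Re: "inner a w = Re (cnj a * w)" for w
    by (simp add: inner_complex_def)
  have "AE x in M. b - inner a z < Re (cnj a * (f x - z))"
    using ae_K
  proof eventually_elim
    case (elim x)
    have "Re (cnj a * (f x - z)) = inner a (f x) - inner a z"
      unfolding inner_Re[symmetric] by (rule inner_diff_right)
    then show ?case
      using ab(2)[OF elim] by simp
  qed
  moreover have "K \<noteq> {}"
  proof
    assume "K = {}"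
    then have "AE x in M. False"
      using ae_K by simp
    then show False
      by simp
  qed
  then have "a \<noteq> 0"
    using ab by fastforce
  moreover have "0 < b - inner a z"
    using ab(1) by simp
  ultimately show ?thesis
    using that by blast
qed

context dual_haar
begin
lemma toeplitz_inverse_if_contraction:
  assumes \<psi>: "ess_bounded \<mu> \<psi>" and s: "s \<noteq> 0" and r: "0 \<le> r" "r < 1"
    and bound: "AE \<omega> in \<mu>. cmod (1 - s * \<psi> \<omega>) \<le> r"
  shows "\<exists>S. l2_plus_inverse (toeplitz \<psi>) S"
proof -
  define \<phi> where "\<phi> \<omega> = 1 - s * \<psi> \<omega>" for \<omega>
  have \<phi>: "ess_bounded \<mu> \<phi>"
    unfolding \<phi>_def by (intro ess_bounded_diff ess_bounded_const ess_bounded_cmult \<psi>)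
  have toeplitz_\<phi>: "toeplitz \<phi> g = (\<lambda>\<xi>. g \<xi> - s * toeplitz \<psi> g \<xi>)" if "g \<in> l2_plus" for g
    using toeplitz_linear_symbol[OF ess_bounded_const \<psi> l2_plus_imp_l2[OF that], of 1 1 "- s"]
      toeplitz_const[OF that, of 1]
    by (simp add: \<phi>_def[abs_def])
  interpret contraction: l2_plus_contraction "toeplitz \<phi>" r
  proof
    fix g :: "'x \<Rightarrow> complex"
    assume "g \<in> l2_plus"
    then show "toeplitz \<phi> g \<in> l2_plus" "l2_norm (toeplitz \<phi> g) \<le> r * l2_norm g"
      using toeplitz_bound[OF \<phi> bound[folded \<phi>_def] r(1) l2_plus_imp_l2] by auto
  next
    fix f g :: "'x \<Rightarrow> complex" and a b
    assume "f \<in> l2_plus" "g \<in> l2_plus"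
    then show "toeplitz \<phi> (\<lambda>\<xi>. a * f \<xi> + b * g \<xi>) = (\<lambda>\<xi>. a * toeplitz \<phi> f \<xi> + b * toeplitz \<phi> g \<xi>)"
      using toeplitz_linear[OF \<phi>] l2_plus_imp_l2 by blast
  qed (use r in auto)
  have "l2_plus_inverse (\<lambda>g \<xi>. s * toeplitz \<psi> g \<xi>) contraction.neumann_sum"
    using contraction.neumann_sum_inverse by (rule l2_plus_inverse_cong) (simp add: toeplitz_\<phi>)
  then show ?thesis
    using l2_plus_inverse_scale s by blast
qed

theorem spectrum_toeplitz_subset_closed_convex_hull:
  assumes \<psi>: "ess_bounded \<mu> \<psi>"
  shows "spectrum_l2_plus (toeplitz \<psi>) \<subseteq> closure (convex hull (ess_range \<mu> \<psi>))"
proof (rule subsetI, rule ccontr)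
  fix z
  assume z_spec: "z \<in> spectrum_l2_plus (toeplitz \<psi>)"
    and "z \<notin> closure (convex hull (ess_range \<mu> \<psi>))"
  then obtain a \<delta> where a: "a \<noteq> 0" and \<delta>: "0 < \<delta>"
    and half_plane: "AE \<omega> in \<mu>. \<delta> < Re (cnj a * (\<psi> \<omega> - z))"
    using AE_separating_half_plane[OF ess_bounded_measurable[OF \<psi>]] by blast
  obtain B where B: "AE \<omega> in \<mu>. cmod (\<psi> \<omega> - z) \<le> B"
    using ess_bounded_diff[OF \<psi> ess_bounded_const] by (rule ess_boundedE)
  obtain t r where t: "0 < t" "0 \<le> r" "r < 1"
    and contraction: "\<And>w. \<delta> < Re (cnj a * w) \<Longrightarrow> cmod w \<le> B \<Longrightarrow> cmod (1 - of_real t * cnj a * w) \<le> r"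
    using half_plane_contraction[OF \<delta>] by blast
  have "AE \<omega> in \<mu>. cmod (1 - complex_of_real t * cnj a * (\<psi> \<omega> - z)) \<le> r"
    using half_plane B by eventually_elim (rule contraction)
  then obtain S where "l2_plus_inverse (toeplitz (\<lambda>\<omega>. \<psi> \<omega> - z)) S"
    using toeplitz_inverse_if_contraction[OF ess_bounded_diff[OF \<psi> ess_bounded_const], of "t * cnj a"]
      t a by (auto simp: mult.assoc)
  then have "l2_plus_inverse (\<lambda>g \<xi>. toeplitz \<psi> g \<xi> - z * g \<xi>) S"
    by (rule l2_plus_inverse_cong) (simp add: toeplitz_minus_const[OF \<psi>])
  then show False
    using z_spec unfolding spectrum_l2_plus_iff by blast
qed

end

section \<open>Symbols given by Fourier series\<close>

context dual_haar
begin

lemma is_check_trig_poly_approx: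
  assumes check: "is_check \<mu> k h" and h: "ess_bounded \<mu> h" and e: "0 < e"
  obtains X where "finite X" "\<And>Y. finite Y \<Longrightarrow> X \<subseteq> Y \<Longrightarrow> L2_sqnorm \<mu> (\<lambda>\<omega>. h \<omega> - trig_poly Y k \<omega>) < e"
proof -
  have "((\<lambda>F. \<integral>\<^sup>+ \<omega>. ennreal ((cmod (h \<omega> - (\<Sum>\<xi>\<in>F. k \<xi> * \<omega> \<xi>)))\<^sup>2) \<partial>\<mu>) \<longlongrightarrow> 0) (finite_subsets_at_top UNIV)"
    using check unfolding is_check_def by blast
  then have "\<forall>\<^sub>F F in finite_subsets_at_top UNIV.
      (\<integral>\<^sup>+ \<omega>. ennreal ((cmod (h \<omega> - trig_poly F k \<omega>))\<^sup>2) \<partial>\<mu>) < ennreal e"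
    unfolding trig_poly_def by (rule order_tendstoD(2)) (use e in simp)
  then obtain X where X: "finite X"
    "\<And>Y. finite Y \<Longrightarrow> X \<subseteq> Y \<Longrightarrow> (\<integral>\<^sup>+ \<omega>. ennreal ((cmod (h \<omega> - trig_poly Y k \<omega>))\<^sup>2) \<partial>\<mu>) < ennreal e"
    unfolding eventually_finite_subsets_at_top by auto
  have "L2_sqnorm \<mu> (\<lambda>\<omega>. h \<omega> - trig_poly Y k \<omega>) < e" if Y: "finite Y" "X \<subseteq> Y" for Y
  proof -
    have "(\<integral>\<^sup>+ \<omega>. ennreal ((cmod (h \<omega> - trig_poly Y k \<omega>))\<^sup>2) \<partial>\<mu>) = ennreal (L2_sqnorm \<mu> (\<lambda>\<omega>. h \<omega> - trig_poly Y k \<omega>))"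
      unfolding L2_sqnorm_def
      by (intro nn_integral_eq_integral ess_bounded_integrable_norm_squared ess_bounded_diff h
          ess_bounded_trig_poly Y) auto
    then show ?thesis
      using X(2)[OF Y] by (simp add: ennreal_less_iff L2_sqnorm_nonneg)
  qed
  then show ?thesis
    using X(1) that by blast
qed

lemma is_check_approximable:
  assumes "is_check \<mu> k h" "ess_bounded \<mu> h"
  shows "approximable h"
  unfolding approximable_def
proof (intro conjI allI impI assms(2))
  fix e :: real
  assume "0 < e"
  then obtain X where "finite X" "L2_sqnorm \<mu> (\<lambda>\<omega>. h \<omega> - trig_poly X k \<omega>) < e"
    using is_check_trig_poly_approx[OF assms] by blast
  then show "\<exists>F c. finite F \<and> L2_sqnorm \<mu> (\<lambda>\<omega>. h \<omega> - trig_poly F c \<omega>) < e"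
    by blast
qed

lemma is_check_fourier_coeff:
  assumes check: "is_check \<mu> k h" and h: "ess_bounded \<mu> h"
  shows "fourier_coeff h = k"
proof
  fix \<xi>
  have "(cmod (fourier_coeff h \<xi> - k \<xi>))\<^sup>2 \<le> e" if e: "0 < e" for e
  proof -
    obtain X where X: "finite X" "\<And>Y. finite Y \<Longrightarrow> X \<subseteq> Y \<Longrightarrow> L2_sqnorm \<mu> (\<lambda>\<omega>. h \<omega> - trig_poly Y k \<omega>) < e"
      using is_check_trig_poly_approx[OF check h e] by blast
    define Y where "Y = insert \<xi> X"
    have Y: "finite Y" "X \<subseteq> Y" "\<xi> \<in> Y"
      unfolding Y_def using X(1) by auto
    have "fourier_coeff h \<xi> - k \<xi> = L2_inner \<mu> (\<lambda>\<omega>. h \<omega> - trig_poly Y k \<omega>) (\<lambda>\<omega>. \<omega> \<xi>)"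
      unfolding fourier_coeff_def using Y h
      by (simp add: L2_inner_diff_left ess_bounded_trig_poly ess_bounded_eval L2_inner_trig_poly_eval)
    then have "(cmod (fourier_coeff h \<xi> - k \<xi>))\<^sup>2 \<le> L2_sqnorm \<mu> (\<lambda>\<omega>. h \<omega> - trig_poly Y k \<omega>)"
      using bessel_inequality[OF ess_bounded_diff[OF h ess_bounded_trig_poly[OF Y(1)]], of "{\<xi>}"] by simp
    then show ?thesis
      using X(2)[OF Y(1,2)] by simp
  qed
  then have "(cmod (fourier_coeff h \<xi> - k \<xi>))\<^sup>2 \<le> 0"
    by (metis field_le_epsilon add_0)
  then show "fourier_coeff h \<xi> = k \<xi>"
    by simp
qed

end

theorem mainTheorem6:
  fixes \<mu> :: "('x::linordered_ab_group_add \<Rightarrow> complex) measure"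
    and k :: "'x \<Rightarrow> complex"
    and h :: "('x \<Rightarrow> complex) \<Rightarrow> complex"
  assumes "haar_dual \<mu>"
    and "(\<lambda>\<xi>. (cmod (k \<xi>))\<^sup>2) summable_on UNIV"
    and "is_check \<mu> k h"
    and "\<exists>C. AE x in \<mu>. cmod (h x) \<le> C"
  shows "ess_range \<mu> h \<subseteq> spectrum_l2_plus (W k) \<and>
         spectrum_l2_plus (W k) \<subseteq> closure (convex hull (ess_range \<mu> h))"
proof -
  interpret dual_haar \<mu>
    using assms(1) by unfold_locales
  have h: "ess_bounded \<mu> h"
    using assms(3,4) unfolding is_check_def ess_bounded_def by blast
  have "W k = toeplitz h"
    unfolding W_def toeplitz_def is_check_fourier_coeff[OF assms(3) h] ..
  then show ?thesis
    using ess_range_subset_spectrum_toeplitz[OF is_check_approximable[OF assms(3) h]]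
      spectrum_toeplitz_subset_closed_convex_hull[OF h]
    by simp
qed

end
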